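(* Let $A=A_n^\ell$, $e=\gcd(n,\ell)$, and let $M$ be an indecomposable non-projective $A$-module with length $\ell(M)$. Then the $\nu$-orbit $O_\nu(M)$ of $M$ is an orthogonal system in $A$-$\underline{\mathrm{mod}}$ if and only if $\ell(M)\le e$ or $\ell+1-e\le\ell(M)\le\ell$.
   Context: $A_n^\ell=kQ/I$ ($k$ algebraically closed), $Q$ the cyclic quiver with vertices $1,\dots,n$ and arrows $i\to i+1$ ($i<n$), $n\to 1$, $I$ generated by all paths of length $\ell+1$. $\ell(M)$ denotes the number of composition factors of $M$; indecomposable modules are uniserial and are projective iff of length $\ell+1$. $\nu$ is the Nakayama functor, $O_\nu(M)$ the set of (isomorphism classes of) modules $\nu^j(M)$, $j\in\mathbb{Z}$. $\underline{\mathrm{Hom}}_A(M,N)$ is $\mathrm{Hom}_A(M,N)$ modulo morphisms factoring through projective modules. A stable brick is an indecomposable $M$ with $\underline{\mathrm{Hom}}_A(M,M)\cong k$; an orthogonal system is a set of stable bricks with $\underline{\mathrm{Hom}}_A(M,N)=0$ for all distinct $M,N$ in it. *)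

theory Defs
  imports "Jordan_Normal_Form.Matrix" "HOL-Computational_Algebra.Polynomial"
begin

text \<open>Finite-dimensional representations of the cyclic quiver with vertices
  0,...,n-1 (vertex i stands for vertex i+1 of the paper) and arrows i -> (i+1) mod n,
  bound by all paths of length l+1.  Such representations are exactly the
  finite-dimensional (left) modules over A_n^l.\<close>

record 'k qrep =
  dims :: "nat \<Rightarrow> nat"
  maps :: "nat \<Rightarrow> 'k mat"

definition nxt :: "nat \<Rightarrow> nat \<Rightarrow> nat" where
  "nxt n i = (i + 1) mod n"

fun pathmap :: "nat \<Rightarrow> 'k::field qrep \<Rightarrow> nat \<Rightarrow> nat \<Rightarrow> 'k mat" where
  "pathmap n M i 0 = 1\<^sub>m (dims M i)"
| "pathmap n M i (Suc m) = maps M ((i + m) mod n) * pathmap n M i m"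

definition is_rep :: "nat \<Rightarrow> nat \<Rightarrow> 'k::field qrep \<Rightarrow> bool" where
  "is_rep n l M \<longleftrightarrow>
     (\<forall>i<n. maps M i \<in> carrier_mat (dims M (nxt n i)) (dims M i)) \<and>
     (\<forall>i<n. pathmap n M i (Suc l) = 0\<^sub>m (dims M ((i + Suc l) mod n)) (dims M i))"

definition is_hom :: "nat \<Rightarrow> (nat \<Rightarrow> 'k::field mat) \<Rightarrow> 'k qrep \<Rightarrow> 'k qrep \<Rightarrow> bool" where
  "is_hom n f M N \<longleftrightarrow>
     (\<forall>i<n. f i \<in> carrier_mat (dims N i) (dims M i)) \<and>
     (\<forall>i<n. f (nxt n i) * maps M i = maps N i * f i)"

definition is_epi :: "nat \<Rightarrow> (nat \<Rightarrow> 'k::field mat) \<Rightarrow> 'k qrep \<Rightarrow> 'k qrep \<Rightarrow> bool" where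
  "is_epi n f M N \<longleftrightarrow> is_hom n f M N \<and>
     (\<forall>i<n. \<forall>y \<in> carrier_vec (dims N i). \<exists>x \<in> carrier_vec (dims M i). f i *\<^sub>v x = y)"

definition iso :: "nat \<Rightarrow> 'k::field qrep \<Rightarrow> 'k qrep \<Rightarrow> bool" where
  "iso n M N \<longleftrightarrow> (\<exists>f g. is_hom n f M N \<and> is_hom n g N M \<and>
     (\<forall>i<n. g i * f i = 1\<^sub>m (dims M i) \<and> f i * g i = 1\<^sub>m (dims N i)))"

definition projective :: "nat \<Rightarrow> nat \<Rightarrow> 'k::field qrep \<Rightarrow> bool" where
  "projective n l P \<longleftrightarrow> is_rep n l P \<and>
     (\<forall>X Y g f. is_rep n l X \<longrightarrow> is_rep n l Y \<longrightarrow> is_epi n g X Y \<longrightarrow> is_hom n f P Y \<longrightarrow>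
        (\<exists>h. is_hom n h P X \<and> (\<forall>i<n. g i * h i = f i)))"

definition is_zero_rep :: "nat \<Rightarrow> 'k qrep \<Rightarrow> bool" where
  "is_zero_rep n M \<longleftrightarrow> (\<forall>i<n. dims M i = 0)"

definition indecomposable :: "nat \<Rightarrow> nat \<Rightarrow> 'k::field qrep \<Rightarrow> bool" where
  "indecomposable n l M \<longleftrightarrow> is_rep n l M \<and> \<not> is_zero_rep n M \<and>
     (\<forall>e. is_hom n e M M \<longrightarrow> (\<forall>i<n. e i * e i = e i) \<longrightarrow>
        (\<forall>i<n. e i = 0\<^sub>m (dims M i) (dims M i)) \<or> (\<forall>i<n. e i = 1\<^sub>m (dims M i)))"

text \<open>length = number of composition factors = total dimension\<close>
definition len :: "nat \<Rightarrow> 'k qrep \<Rightarrow> nat" where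
  "len n M = (\<Sum>i<n. dims M i)"

definition factors_proj :: "nat \<Rightarrow> nat \<Rightarrow> (nat \<Rightarrow> 'k::field mat) \<Rightarrow> 'k qrep \<Rightarrow> 'k qrep \<Rightarrow> bool" where
  "factors_proj n l f M N \<longleftrightarrow>
     (\<exists>P g h. projective n l P \<and> is_hom n g M P \<and> is_hom n h P N \<and> (\<forall>i<n. f i = h i * g i))"

definition stable_hom_zero :: "nat \<Rightarrow> nat \<Rightarrow> 'k::field qrep \<Rightarrow> 'k qrep \<Rightarrow> bool" where
  "stable_hom_zero n l M N \<longleftrightarrow> (\<forall>f. is_hom n f M N \<longrightarrow> factors_proj n l f M N)"

text \<open>stable End(M) is one-dimensional, i.e. isomorphic to k\<close>
definition stable_brick :: "nat \<Rightarrow> nat \<Rightarrow> 'k::field qrep \<Rightarrow> bool" where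
  "stable_brick n l M \<longleftrightarrow> indecomposable n l M \<and>
     (\<exists>f. is_hom n f M M \<and> \<not> factors_proj n l f M M \<and>
        (\<forall>g. is_hom n g M M \<longrightarrow>
           (\<exists>c. factors_proj n l (\<lambda>i. g i - c \<cdot>\<^sub>m f i) M M)))"

text \<open>orthogonal system: a set of stable bricks (given by representatives;
  distinct isoclasses = non-isomorphic representatives)\<close>
definition orthogonal_system :: "nat \<Rightarrow> nat \<Rightarrow> 'k::field qrep set \<Rightarrow> bool" where
  "orthogonal_system n l S \<longleftrightarrow>
     (\<forall>X\<in>S. stable_brick n l X) \<and>
     (\<forall>X\<in>S. \<forall>Y\<in>S. \<not> iso n X Y \<longrightarrow> stable_hom_zero n l X Y)"

text \<open>Nakayama functor of A_n^l: nu(P_i) = I_i = P_(i-l); on modules it is (up to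
  isomorphism) the twist relabelling vertices, nu(M)_j = M_(j+l).
  nu_pow n l j M is nu^j(M) for an integer j.\<close>
definition shift_rep :: "nat \<Rightarrow> nat \<Rightarrow> 'k qrep \<Rightarrow> 'k qrep" where
  "shift_rep n s M = \<lparr> dims = (\<lambda>i. dims M ((i + s) mod n)), maps = (\<lambda>i. maps M ((i + s) mod n)) \<rparr>"

definition nu_pow :: "nat \<Rightarrow> nat \<Rightarrow> int \<Rightarrow> 'k qrep \<Rightarrow> 'k qrep" where
  "nu_pow n l j M = shift_rep n (nat ((j * int l) mod int n)) M"

definition nu_orbit :: "nat \<Rightarrow> nat \<Rightarrow> 'k::field qrep \<Rightarrow> 'k qrep set" where
  "nu_orbit n l M = {N. is_rep n l N \<and> (\<exists>j::int. iso n N (nu_pow n l j M))}"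

definition alg_closed_field :: "'k::field itself \<Rightarrow> bool" where
  "alg_closed_field _ \<longleftrightarrow> (\<forall>p :: 'k poly. degree p \<ge> 1 \<longrightarrow> (\<exists>x. poly p x = 0))"

end

theory Submission
  imports Defs "Jordan_Normal_Form.Determinant" "HOL-Computational_Algebra.Formal_Power_Series"
begin

text \<open>Every indecomposable module is uniserial, isomorphic to the module uniserial n t m with top
  at vertex t and length m, and it is projective iff m = l + 1. The Nakayama functor rotates
  the vertices by l, so the \<nu>-orbit of uniserial n t m consists of the modules uniserial n
  t' m whose tops t' run through the coset t + gcd n l \<int> modulo n.

  A morphism out of a uniserial module is determined by the image of its top vector, and it
  factors through a projective iff it lifts to the projective cover of the target; this
  happens iff the image vanishes at every position that a path of length m does not push out
  of the cover. Consequently uniserial n t m is a stable brick iff m \<le> n or l + 1 \<le> m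
  + n, and the stable morphisms from uniserial n t1 m to uniserial n t2 m vanish iff m \<le> d
  or l + 1 \<le> m + d, where d = (t1 - t2) mod n. Within the orbit the smallest nonzero such
  d is gcd n l.\<close>

section \<open>Matrices\<close>

lemma assoc_mult_mat_dims [simp]:
  "dim_col A = dim_row B \<Longrightarrow> dim_col B = dim_row C \<Longrightarrow> (A :: 'a :: semiring_0 mat) * B * C = A *
      (B * C)"
  by (rule assoc_mult_mat[of A "dim_row A" "dim_col A" B "dim_col B" C "dim_col C"]) auto

lemma assoc_mult_mat_vec_dims [simp]:
  "dim_col A = dim_row B \<Longrightarrow> dim_col B = dim_vec v \<Longrightarrow> ((A :: 'a :: semiring_0 mat) * B) *\<^sub>v v = A *\<^sub>v
      (B *\<^sub>v v)"
  by (rule assoc_mult_mat_vec[of A "dim_row A" "dim_col A" B "dim_col B" v]) auto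

lemma mult_mat_vec_unit_vec:
  assumes "(A :: 'a :: semiring_1 mat) \<in> carrier_mat r c" "b < c"
  shows "A *\<^sub>v unit_vec c b = col A b"
  using assms by (intro eq_vecI) (auto simp: scalar_prod_right_unit)

lemma mat_eq_unit_vecI:
  assumes "(A :: 'a :: semiring_1 mat) \<in> carrier_mat r c" "B \<in> carrier_mat r c"
    and "\<And>b. b < c \<Longrightarrow> A *\<^sub>v unit_vec c b = B *\<^sub>v unit_vec c b"
  shows "A = B"
  using assms by (intro mat_col_eqI) (auto simp: mult_mat_vec_unit_vec[symmetric])

lemma mult_mat_vec_zero: "(A :: 'a :: semiring_0 mat) \<in> carrier_mat r c \<Longrightarrow> A *\<^sub>v 0\<^sub>v c = 0\<^sub>v r"
  by (intro eq_vecI) (auto simp: scalar_prod_def)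

lemma zero_mult_mat_vec: "v \<in> carrier_vec c \<Longrightarrow> (0\<^sub>m r c :: 'a :: semiring_0 mat) *\<^sub>v v = 0\<^sub>v r"
  by (intro eq_vecI) (auto simp: scalar_prod_def)

lemma scalar_prod_zero_vec_any [simp]: "(v :: 'a :: semiring_0 vec) \<bullet> 0\<^sub>v k = 0"
  by (simp add: scalar_prod_def)

lemma index_minus_smult_mult_mat_vec:
  assumes "(A :: 'a :: comm_ring mat) \<in> carrier_mat r c" "B \<in> carrier_mat r c" "v \<in> carrier_vec c"
      "q < r"
  shows "((A - k \<cdot>\<^sub>m B) *\<^sub>v v) $ q = (A *\<^sub>v v) $ q - k * (B *\<^sub>v v) $ q"
  using assms by (simp add: scalar_prod_def sum_subtractf sum_distrib_left algebra_simps)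

lemma mult_minus_smult_mult_mat:
  assumes "(B :: 'a :: comm_ring mat) \<in> carrier_mat p q" "G \<in> carrier_mat q q" "F \<in> carrier_mat q q"
    "A \<in> carrier_mat q r"
  shows "B * (G - c \<cdot>\<^sub>m F) * A = B * G * A - c \<cdot>\<^sub>m (B * F * A)"
proof -
  have "B * (G - c \<cdot>\<^sub>m F) = B * G - c \<cdot>\<^sub>m (B * F)"
    using assms by (simp add: mult_minus_distrib_mat mult_smult_distrib)
  then show ?thesis
    using assms by (simp add: minus_mult_distrib_mat[of _ p q] mult_smult_assoc_mat[of _ p q])
qed

lemma mult_mat_vec_sum:
  assumes A: "(A :: 'a :: comm_semiring_0 mat) \<in> carrier_mat r c" and S: "finite S"
    and vs: "\<And>j. j \<in> S \<Longrightarrow> vs j \<in> carrier_vec c"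
  shows "A *\<^sub>v vec c (\<lambda>i. \<Sum>j\<in>S. f j * vs j $ i) = vec r (\<lambda>i. \<Sum>j\<in>S. f j * (A *\<^sub>v vs j) $ i)"
proof (rule eq_vecI)
  fix i assume "i < dim_vec (vec r (\<lambda>i. \<Sum>j\<in>S. f j * (A *\<^sub>v vs j) $ i))"
  then have i: "i < r" by simp
  have "(A *\<^sub>v vec c (\<lambda>i. \<Sum>j\<in>S. f j * vs j $ i)) $ i = (\<Sum>k<c. A $$ (i,k) * (\<Sum>j\<in>S. f j * vs j $ k))"
    using A i by (simp add: scalar_prod_def atLeast0LessThan)
  also have "\<dots> = (\<Sum>j\<in>S. f j * (\<Sum>k<c. A $$ (i,k) * vs j $ k))"
    by (simp add: sum_distrib_left mult.left_commute sum.swap[of _ S])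
  also have "\<dots> = (\<Sum>j\<in>S. f j * (A *\<^sub>v vs j) $ i)"
    using A i by (intro sum.cong) (auto simp: scalar_prod_def atLeast0LessThan carrier_vecD[OF vs])
  finally show "(A *\<^sub>v vec c (\<lambda>i. \<Sum>j\<in>S. f j * vs j $ i)) $ i = vec r
      (\<lambda>i. \<Sum>j\<in>S. f j * (A *\<^sub>v vs j) $ i) $ i"
    using i by simp
qed (use A in simp)

lemma scalar_prod_vec_sum:
  assumes phi: "(phi :: 'a :: comm_semiring_0 vec) \<in> carrier_vec r"
    and vs: "\<And>j. j \<in> S \<Longrightarrow> vs j \<in> carrier_vec r"
  shows "phi \<bullet> vec r (\<lambda>i. \<Sum>j\<in>S. f j * vs j $ i) = (\<Sum>j\<in>S. f j * (phi \<bullet> vs j))"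
proof -
  have "phi \<bullet> vec r (\<lambda>i. \<Sum>j\<in>S. f j * vs j $ i) = (\<Sum>i<r. phi $ i * (\<Sum>j\<in>S. f j * vs j $ i))"
    using phi by (simp add: scalar_prod_def atLeast0LessThan)
  also have "\<dots> = (\<Sum>j\<in>S. f j * (\<Sum>i<r. phi $ i * vs j $ i))"
    by (simp add: sum_distrib_left mult.left_commute sum.swap[of _ S])
  also have "\<dots> = (\<Sum>j\<in>S. f j * (phi \<bullet> vs j))"
    by (intro sum.cong) (auto simp: scalar_prod_def atLeast0LessThan carrier_vecD[OF vs])
  finally show ?thesis .
qed

text \<open>A right-invertible r \<times> c matrix has r \<le> c: otherwise pad both factors to square
  matrices, whose product is still the identity although one of them has a zero column.\<close>
lemma right_invertible_mat_dim_le: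
  assumes A: "(A :: 'a :: field mat) \<in> carrier_mat r c" and B: "B \<in> carrier_mat c r"
    and AB: "A * B = 1\<^sub>m r"
  shows "r \<le> c"
proof (rule ccontr)
  assume "\<not> r \<le> c"
  then have cr: "c < r" by simp
  define A' where "A' = mat r r (\<lambda>(i,j). if j < c then A $$ (i,j) else 0)"
  define B' where "B' = mat r r (\<lambda>(i,j). if i < c then B $$ (i,j) else 0)"
  have cA': "A' \<in> carrier_mat r r" "B' \<in> carrier_mat r r" unfolding A'_def B'_def by auto
  have "A' * B' = 1\<^sub>m r"
  proof (rule eq_matI)
    fix i j assume ij: "i < dim_row (1\<^sub>m r)" "j < dim_col (1\<^sub>m r)"
    then have i: "i < r" and j: "j < r" by auto
    have "(A' * B') $$ (i,j) = (\<Sum>k\<in>{0..<r}. A' $$ (i,k) * B' $$ (k,j))"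
      using i j cA' by (simp add: scalar_prod_def)
    also have "\<dots> = (\<Sum>k\<in>{0..<c}. A' $$ (i,k) * B' $$ (k,j))"
      using cr i j by (intro sum.mono_neutral_right) (auto simp: A'_def B'_def)
    also have "\<dots> = (\<Sum>k\<in>{0..<c}. A $$ (i,k) * B $$ (k,j))"
      using i j cr by (intro sum.cong) (auto simp: A'_def B'_def)
    also have "\<dots> = (A * B) $$ (i,j)" using i j A B by (simp add: scalar_prod_def)
    finally show "(A' * B') $$ (i,j) = 1\<^sub>m r $$ (i,j)" using AB by simp
  qed (insert cA', auto)
  then have "det A' * det B' = 1" using det_mult[OF cA'] by simp
  moreover have "det A' = 0"
  proof -
    have "A' *\<^sub>v unit_vec r (r - 1) = 0\<^sub>v r"
      using cr by (intro eq_vecI) (auto simp: A'_def scalar_prod_right_unit)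
    moreover have "unit_vec r (r - 1) \<noteq> (0\<^sub>v r :: 'a vec)" using cr by simp
    ultimately show ?thesis
      using det_0_iff_vec_prod_zero_field[OF cA'(1)] unit_vec_carrier[of r "r - 1"] by blast
  qed
  ultimately show False by simp
qed

section \<open>Representations of the cyclic quiver\<close>

lemma is_rep_maps_carrier:
  "is_rep n l M \<Longrightarrow> i < n \<Longrightarrow> maps M i \<in> carrier_mat (dims M ((i+1) mod n)) (dims M i)"
  by (simp add: is_rep_def nxt_def)

lemma is_hom_carrier: "is_hom n f M N \<Longrightarrow> i < n \<Longrightarrow> f i \<in> carrier_mat (dims N i) (dims M i)"
  by (simp add: is_hom_def)

lemma is_hom_commute: "is_hom n f M N \<Longrightarrow> i < n \<Longrightarrow> f ((i+1) mod n) * maps M i = maps N i * f i"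
  by (simp add: is_hom_def nxt_def)

lemma pathmap_carrier:
  assumes "is_rep n l M" "i < n"
  shows "pathmap n M i s \<in> carrier_mat (dims M ((i+s) mod n)) (dims M i)"
proof (induction s)
  case (Suc s)
  have "maps M ((i+s) mod n) \<in> carrier_mat (dims M ((i + Suc s) mod n)) (dims M ((i+s) mod n))"
    using is_rep_maps_carrier[OF assms(1), of "(i+s) mod n"] assms(2) by (simp add: mod_simps)
  then show ?case using Suc by auto
qed (use assms in simp)

lemma pathmap_add:
  assumes "is_rep n l M" "i < n"
  shows "pathmap n M ((i+s1) mod n) s2 * pathmap n M i s1 = pathmap n M i (s1+s2)"
proof (induction s2)
  case 0
  then show ?case using pathmap_carrier[OF assms, of s1] by simp
next
  case (Suc s2)
  let ?j = "(i+s1) mod n"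
  have j: "?j < n" using assms(2) by simp
  have e: "(?j + s2) mod n = (i + (s1 + s2)) mod n" by (simp add: mod_simps add.assoc)
  have c: "pathmap n M i s1 \<in> carrier_mat (dims M ?j) (dims M i)"
    "pathmap n M ?j s2 \<in> carrier_mat (dims M ((?j + s2) mod n)) (dims M ?j)"
    "maps M ((?j + s2) mod n) \<in> carrier_mat (dims M (((?j + s2) mod n + 1) mod n))
        (dims M ((?j + s2) mod n))"
    using pathmap_carrier[OF assms] pathmap_carrier[OF assms(1) j] is_rep_maps_carrier[OF assms(1)]
        j
    by auto
  then have "pathmap n M ?j (Suc s2) * pathmap n M i s1
      = maps M ((?j + s2) mod n) * (pathmap n M ?j s2 * pathmap n M i s1)"
    by simp
  also have "\<dots> = pathmap n M i (s1 + Suc s2)" using Suc e by simp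
  finally show ?case .
qed

lemma pathmap_Suc_prepend:
  assumes "is_rep n l M" "i < n"
  shows "pathmap n M ((i+1) mod n) s * maps M i = pathmap n M i (Suc s)"
proof -
  have "pathmap n M i 1 = maps M i" using is_rep_maps_carrier[OF assms] assms(2) by simp
  then show ?thesis using pathmap_add[OF assms, of 1 s] by simp
qed

lemma pathmap_zero_mono:
  assumes M: "is_rep n l M"
    and zero: "\<forall>i<n. pathmap n M i d = 0\<^sub>m (dims M ((i + d) mod n)) (dims M i)"
    and i: "i < n" and s: "d \<le> s"
  shows "pathmap n M i s = 0\<^sub>m (dims M ((i + s) mod n)) (dims M i)"
proof -
  have "pathmap n M i s = pathmap n M ((i + d) mod n) (s - d) * pathmap n M i d"
    using pathmap_add[OF M i, of d "s - d"] s by simp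
  moreover have "((i + d) mod n + (s - d)) mod n = (i + s) mod n"
    using s by (metis mod_add_left_eq add.assoc le_add_diff_inverse)
  then have "pathmap n M ((i + d) mod n) (s - d) \<in> carrier_mat (dims M ((i + s) mod n))
      (dims M ((i + d) mod n))"
    using pathmap_carrier[OF M, of "(i + d) mod n" "s - d"] i by simp
  ultimately show ?thesis using zero i by simp
qed

lemma is_hom_pathmap:
  assumes "is_rep n l M" "is_rep n l' N" "is_hom n f M N" "i < n"
  shows "f ((i+s) mod n) * pathmap n M i s = pathmap n N i s * f i"
proof (induction s)
  case 0
  then show ?case using is_hom_carrier[OF assms(3,4)] assms(4) by simp
next
  case (Suc s)
  let ?j = "(i+s) mod n"
  have j: "?j < n" using assms(4) by simp
  have e: "(?j + 1) mod n = (i + Suc s) mod n" by (simp add: mod_simps)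
  have c: "pathmap n M i s \<in> carrier_mat (dims M ?j) (dims M i)"
    "pathmap n N i s \<in> carrier_mat (dims N ?j) (dims N i)"
    "maps M ?j \<in> carrier_mat (dims M ((?j+1) mod n)) (dims M ?j)"
    "maps N ?j \<in> carrier_mat (dims N ((?j+1) mod n)) (dims N ?j)"
    "f ((?j+1) mod n) \<in> carrier_mat (dims N ((?j+1) mod n)) (dims M ((?j+1) mod n))"
    "f ?j \<in> carrier_mat (dims N ?j) (dims M ?j)" "f i \<in> carrier_mat (dims N i) (dims M i)"
    using pathmap_carrier[OF assms(1,4)] pathmap_carrier[OF assms(2,4)] is_rep_maps_carrier[OF _ j]
      is_hom_carrier[OF assms(3)] assms j by auto
  have "f ((i + Suc s) mod n) * pathmap n M i (Suc s) = (f ((?j+1) mod n) * maps M ?j) * pathmap n M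
      i s"
    using e c by simp
  also have "\<dots> = maps N ?j * (f ?j * pathmap n M i s)"
    using is_hom_commute[OF assms(3) j] c by simp
  also have "\<dots> = pathmap n N i (Suc s) * f i" using Suc c by simp
  finally show ?case .
qed

lemma is_hom_pathmap_vec:
  assumes "is_rep n l M" "is_rep n l' N" "is_hom n f M N" "i < n" "v \<in> carrier_vec (dims M i)"
  shows "f ((i+s) mod n) *\<^sub>v (pathmap n M i s *\<^sub>v v) = pathmap n N i s *\<^sub>v (f i *\<^sub>v v)"
proof -
  have c: "pathmap n M i s \<in> carrier_mat (dims M ((i+s) mod n)) (dims M i)"
    "pathmap n N i s \<in> carrier_mat (dims N ((i+s) mod n)) (dims N i)"
    "f ((i+s) mod n) \<in> carrier_mat (dims N ((i+s) mod n)) (dims M ((i+s) mod n))"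
    "f i \<in> carrier_mat (dims N i) (dims M i)"
    using pathmap_carrier[OF assms(1,4)] pathmap_carrier[OF assms(2,4)] is_hom_carrier[OF assms(3)]
        assms(4)
    by auto
  then have "f ((i+s) mod n) *\<^sub>v (pathmap n M i s *\<^sub>v v) = (f ((i+s) mod n) * pathmap n M i s) *\<^sub>v v"
    using assms(5) by simp
  also have "\<dots> = pathmap n N i s *\<^sub>v (f i *\<^sub>v v)"
    using is_hom_pathmap[OF assms(1-4)] c assms(5) by simp
  finally show ?thesis .
qed

lemma is_hom_comp:
  assumes "is_rep n l M" "is_rep n l1 N" "is_rep n l2 K" "is_hom n f M N" "is_hom n g N K"
  shows "is_hom n (\<lambda>i. g i * f i) M K"
  unfolding is_hom_def
proof (intro conjI allI impI)
  fix i assume i: "i < n"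
  then have j: "nxt n i < n" by (simp add: nxt_def)
  have c: "f i \<in> carrier_mat (dims N i) (dims M i)" "g i \<in> carrier_mat (dims K i) (dims N i)"
    "f (nxt n i) \<in> carrier_mat (dims N (nxt n i)) (dims M (nxt n i))"
    "g (nxt n i) \<in> carrier_mat (dims K (nxt n i)) (dims N (nxt n i))"
    "maps M i \<in> carrier_mat (dims M (nxt n i)) (dims M i)"
    "maps N i \<in> carrier_mat (dims N (nxt n i)) (dims N i)"
    "maps K i \<in> carrier_mat (dims K (nxt n i)) (dims K i)"
    using is_hom_carrier[OF assms(4)] is_hom_carrier[OF assms(5)] i j assms(1-3)
    by (auto simp: is_rep_def)
  then show "g i * f i \<in> carrier_mat (dims K i) (dims M i)" by auto
  have "g (nxt n i) * f (nxt n i) * maps M i = g (nxt n i) * (maps N i * f i)"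
    using assms(4) i c by (simp add: is_hom_def)
  also have "\<dots> = (maps K i * g i) * f i"
    using assms(5) i c by (simp add: is_hom_def flip: assoc_mult_mat_dims)
  finally show "g (nxt n i) * f (nxt n i) * maps M i = maps K i * (g i * f i)" using c by simp
qed

lemma is_hom_id: "is_rep n l M \<Longrightarrow> is_hom n (\<lambda>i. 1\<^sub>m (dims M i)) M M"
  unfolding is_hom_def is_rep_def by auto

lemma is_hom_cong:
  assumes "is_hom n f M N" "\<And>i. i < n \<Longrightarrow> f i = f' i"
  shows "is_hom n f' M N"
  using assms unfolding is_hom_def nxt_def by (metis mod_less_divisor not_less_zero not_gr_zero)

lemma is_hom_diff_smult:
  assumes A: "is_rep n l A" and B: "is_rep n l B" and g: "is_hom n g A B" and f: "is_hom n f A B"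
  shows "is_hom n (\<lambda>i. g i - c \<cdot>\<^sub>m f i) A B"
  unfolding is_hom_def
proof (intro conjI allI impI)
  fix i assume i: "i < n"
  then have j: "nxt n i < n" by (simp add: nxt_def)
  have cc: "g i \<in> carrier_mat (dims B i) (dims A i)" "f i \<in> carrier_mat (dims B i) (dims A i)"
    "g (nxt n i) \<in> carrier_mat (dims B (nxt n i)) (dims A (nxt n i))"
    "f (nxt n i) \<in> carrier_mat (dims B (nxt n i)) (dims A (nxt n i))"
    "maps A i \<in> carrier_mat (dims A (nxt n i)) (dims A i)"
    "maps B i \<in> carrier_mat (dims B (nxt n i)) (dims B i)"
    using is_hom_carrier[OF g] is_hom_carrier[OF f] i j A B by (auto simp: is_rep_def)
  then show "g i - c \<cdot>\<^sub>m f i \<in> carrier_mat (dims B i) (dims A i)" by (intro minus_carrier_mat) simp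
  have "g (nxt n i) * maps A i = maps B i * g i" "f (nxt n i) * maps A i = maps B i * f i"
    using g f i unfolding is_hom_def by simp_all
  then show "(g (nxt n i) - c \<cdot>\<^sub>m f (nxt n i)) * maps A i = maps B i * (g i - c \<cdot>\<^sub>m f i)"
    using cc by (simp add: minus_mult_distrib_mat mult_minus_distrib_mat mult_smult_assoc_mat
        mult_smult_distrib)
qed

lemma isoE:
  assumes "iso n X Y"
  obtains a b where "is_hom n a X Y" "is_hom n b Y X"
    "\<And>i. i < n \<Longrightarrow> b i * a i = 1\<^sub>m (dims X i)" "\<And>i. i < n \<Longrightarrow> a i * b i = 1\<^sub>m (dims Y i)"
proof -
  from assms obtain a b where "is_hom n a X Y" "is_hom n b Y X"
    "\<forall>i<n. b i * a i = 1\<^sub>m (dims X i) \<and> a i * b i = 1\<^sub>m (dims Y i)"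
    unfolding iso_def by blast
  then show ?thesis using that by blast
qed

lemma iso_sym: "iso n M N \<Longrightarrow> iso n N M"
  unfolding iso_def by blast

lemma iso_trans:
  assumes "is_rep n l A" "is_rep n l1 B" "is_rep n l2 C" "iso n A B" "iso n B C"
  shows "iso n A C"
proof -
  obtain f g where fg: "is_hom n f A B" "is_hom n g B A"
    "\<And>i. i < n \<Longrightarrow> g i * f i = 1\<^sub>m (dims A i)" "\<And>i. i < n \<Longrightarrow> f i * g i = 1\<^sub>m (dims B i)"
    by (meson isoE assms(4))
  obtain f' g' where fg': "is_hom n f' B C" "is_hom n g' C B"
    "\<And>i. i < n \<Longrightarrow> g' i * f' i = 1\<^sub>m (dims B i)" "\<And>i. i < n \<Longrightarrow> f' i * g' i = 1\<^sub>m (dims C i)"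
    by (meson isoE assms(5))
  have "(g i * g' i) * (f' i * f i) = 1\<^sub>m (dims A i) \<and> (f' i * f i) * (g i * g' i) = 1\<^sub>m (dims C i)"
    if i: "i < n" for i
  proof -
    note c = is_hom_carrier[OF fg(1) i] is_hom_carrier[OF fg(2) i] is_hom_carrier[OF fg'(1) i]
      is_hom_carrier[OF fg'(2) i]
    have "(g i * g' i) * (f' i * f i) = g i * ((g' i * f' i) * f i)"
         "(f' i * f i) * (g i * g' i) = f' i * ((f i * g i) * g' i)"
      using c by simp_all
    then show ?thesis using fg(3,4)[OF i] fg'(3,4)[OF i] c by simp
  qed
  then show ?thesis unfolding iso_def
    using is_hom_comp[OF assms(1,2,3) fg(1) fg'(1)] is_hom_comp[OF assms(3,2,1) fg'(2) fg(2)]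
      by blast
qed

lemma iso_eqI:
  assumes "is_rep n l A" "\<And>i. i < n \<Longrightarrow> dims A i = dims B i" "\<And>i. i < n \<Longrightarrow> maps A i = maps B i"
  shows "iso n A B"
proof -
  have "is_hom n (\<lambda>i. 1\<^sub>m (dims A i)) A B" "is_hom n (\<lambda>i. 1\<^sub>m (dims A i)) B A"
    using assms unfolding is_hom_def is_rep_def nxt_def by auto
  then show ?thesis unfolding iso_def using assms(2) by fastforce
qed

lemma iso_dims:
  assumes "iso n X Y" "i < n"
  shows "dims X i = dims Y i"
proof -
  obtain a b where ab: "is_hom n a X Y" "is_hom n b Y X"
    "\<And>i. i < n \<Longrightarrow> b i * a i = 1\<^sub>m (dims X i)" "\<And>i. i < n \<Longrightarrow> a i * b i = 1\<^sub>m (dims Y i)"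
    by (meson isoE assms(1))
  note c = is_hom_carrier[OF ab(1) assms(2)] is_hom_carrier[OF ab(2) assms(2)]
  show ?thesis
    using right_invertible_mat_dim_le[OF c(2,1) ab(3)[OF assms(2)]]
      right_invertible_mat_dim_le[OF c(1,2) ab(4)[OF assms(2)]] by simp
qed

lemma iso_len: "iso n X Y \<Longrightarrow> len n X = len n Y"
  unfolding len_def using iso_dims by (metis lessThan_iff sum.cong)

lemma factors_proj_cong:
  assumes "factors_proj n l f M N" "\<And>i. i < n \<Longrightarrow> f i = f' i"
  shows "factors_proj n l f' M N"
  using assms unfolding factors_proj_def by metis

lemma factors_proj_comp:
  assumes "is_rep n l M'" "is_rep n l M" "is_rep n l N" "is_rep n l N'"
    "factors_proj n l f M N" "is_hom n a M' M" "is_hom n b N N'"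
  shows "factors_proj n l (\<lambda>i. b i * f i * a i) M' N'"
proof -
  obtain P g h where P: "projective n l P" "is_hom n g M P" "is_hom n h P N" "\<forall>i<n. f i = h i * g i"
    using assms(5) unfolding factors_proj_def by blast
  have rP: "is_rep n l P" using P(1) unfolding projective_def by simp
  have "b i * f i * a i = (b i * h i) * (g i * a i)" if i: "i < n" for i
    using P(4) i is_hom_carrier[OF P(2) i] is_hom_carrier[OF P(3) i] is_hom_carrier[OF assms(6) i]
      is_hom_carrier[OF assms(7) i] by simp
  then show ?thesis unfolding factors_proj_def
    using P(1) is_hom_comp[OF assms(1,2) rP assms(6) P(2)] is_hom_comp[OF rP assms(3,4) P(3)
        assms(7)]
    by blast
qed

lemma is_hom_comp3:
  assumes "is_rep n l X" "is_rep n l Y" "is_rep n l Z" "is_rep n l W"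
    "is_hom n a X Y" "is_hom n f Y Z" "is_hom n b Z W"
  shows "is_hom n (\<lambda>i. b i * f i * a i) X W"
proof (rule is_hom_cong)
  show "is_hom n (\<lambda>i. b i * (f i * a i)) X W"
    using assms by (intro is_hom_comp[of n l X l Z l W] is_hom_comp[of n l X l Y l Z])
  show "b i * (f i * a i) = b i * f i * a i" if "i < n" for i
    using is_hom_carrier[OF assms(5) that] is_hom_carrier[OF assms(6) that]
      is_hom_carrier[OF assms(7) that] by simp
qed

lemma indecomposable_iso:
  assumes X: "is_rep n l X" and iso: "iso n X Y" and Y: "indecomposable n l Y"
  shows "indecomposable n l X"
proof -
  obtain a b where ab: "is_hom n a X Y" "is_hom n b Y X"
    "\<And>i. i < n \<Longrightarrow> b i * a i = 1\<^sub>m (dims X i)" "\<And>i. i < n \<Longrightarrow> a i * b i = 1\<^sub>m (dims Y i)"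
    by (meson isoE iso)
  have rY: "is_rep n l Y" using Y unfolding indecomposable_def by simp
  have "\<not> is_zero_rep n X"
    using Y iso_dims[OF iso] unfolding indecomposable_def is_zero_rep_def by simp
  moreover have "(\<forall>i<n. e i = 0\<^sub>m (dims X i) (dims X i)) \<or> (\<forall>i<n. e i = 1\<^sub>m (dims X i))"
    if e: "is_hom n e X X" and idem: "\<forall>i<n. e i * e i = e i" for e
  proof -
    define e' where "e' = (\<lambda>i. a i * e i * b i)"
    have e_conj: "e i = b i * e' i * a i" if i: "i < n" for i
    proof -
      note c = is_hom_carrier[OF ab(1) i] is_hom_carrier[OF ab(2) i] is_hom_carrier[OF e i]
      have "b i * e' i * a i = (b i * a i) * e i * (b i * a i)" unfolding e'_def using c by simp
      then show ?thesis using ab(3)[OF i] c by simp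
    qed
    have "is_hom n e' Y Y" unfolding e'_def using is_hom_comp3[OF rY X X rY ab(2) e ab(1)] .
    moreover have "\<forall>i<n. e' i * e' i = e' i"
    proof (intro allI impI)
      fix i assume i: "i < n"
      note c = is_hom_carrier[OF ab(1) i] is_hom_carrier[OF ab(2) i] is_hom_carrier[OF e i]
      have "e' i * e' i = a i * (e i * (b i * a i) * e i) * b i" unfolding e'_def using c by simp
      also have "\<dots> = a i * (e i * e i) * b i" using ab(3)[OF i] c by simp
      finally show "e' i * e' i = e' i" unfolding e'_def using idem i by simp
    qed
    ultimately have "(\<forall>i<n. e' i = 0\<^sub>m (dims Y i) (dims Y i)) \<or> (\<forall>i<n. e' i = 1\<^sub>m (dims Y i))"
      using Y unfolding indecomposable_def by blast
    moreover have "b i * 0\<^sub>m (dims Y i) (dims Y i) * a i = 0\<^sub>m (dims X i) (dims X i)"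
      and "b i * 1\<^sub>m (dims Y i) * a i = 1\<^sub>m (dims X i)" if i: "i < n" for i
      using is_hom_carrier[OF ab(1) i] is_hom_carrier[OF ab(2) i] ab(3)[OF i] by simp_all
    ultimately show ?thesis using e_conj by auto
  qed
  ultimately show ?thesis unfolding indecomposable_def using X by blast
qed

lemma projectiveD:
  assumes "projective n l P" "is_rep n l X" "is_rep n l Y" "is_epi n g X Y" "is_hom n f P Y"
  obtains h where "is_hom n h P X" "\<forall>i<n. g i * h i = f i"
  using assms(1)[unfolded projective_def, THEN conjunct2, rule_format, OF assms(2-5)] that by blast

lemma projective_iso:
  assumes X: "is_rep n l X" and iso: "iso n X Y" and Y: "projective n l Y"
  shows "projective n l X"
  unfolding projective_def
proof (intro conjI allI impI X)
  fix X' Y' g f assume r: "is_rep n l X'" "is_rep n l Y'" and g: "is_epi n g X' Y'"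
    and f: "is_hom n f X Y'"
  obtain a b where ab: "is_hom n a X Y" "is_hom n b Y X"
    "\<And>i. i < n \<Longrightarrow> b i * a i = 1\<^sub>m (dims X i)" "\<And>i. i < n \<Longrightarrow> a i * b i = 1\<^sub>m (dims Y i)"
    by (meson isoE iso)
  have rY: "is_rep n l Y" using Y unfolding projective_def by simp
  have g': "is_hom n g X' Y'" using g unfolding is_epi_def by simp
  obtain h where h: "is_hom n h Y X'" "\<forall>i<n. g i * h i = f i * b i"
    using projectiveD[OF Y r g is_hom_comp[OF rY X r(2) ab(2) f]] by blast
  have "g i * (h i * a i) = f i" if i: "i < n" for i
  proof -
    note c = is_hom_carrier[OF ab(1) i] is_hom_carrier[OF ab(2) i] is_hom_carrier[OF h(1) i]
      is_hom_carrier[OF f i] is_hom_carrier[OF g' i]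
    have "g i * (h i * a i) = (g i * h i) * a i" using c by simp
    also have "\<dots> = f i * (b i * a i)" using h(2) i c by simp
    finally show ?thesis using ab(3)[OF i] c by simp
  qed
  then show "\<exists>h. is_hom n h X X' \<and> (\<forall>i<n. g i * h i = f i)"
    using is_hom_comp[OF X rY r(1) ab(1) h(1)] by blast
qed

lemma stable_hom_zero_iso:
  assumes "is_rep n l X" "is_rep n l Y" "is_rep n l X'" "is_rep n l Y'"
    "iso n X X'" "iso n Y Y'" "stable_hom_zero n l X' Y'"
  shows "stable_hom_zero n l X Y"
  unfolding stable_hom_zero_def
proof (intro allI impI)
  fix f assume f: "is_hom n f X Y"
  obtain a1 b1 where ab1: "is_hom n a1 X X'" "is_hom n b1 X' X"
    "\<And>i. i < n \<Longrightarrow> b1 i * a1 i = 1\<^sub>m (dims X i)" "\<And>i. i < n \<Longrightarrow> a1 i * b1 i = 1\<^sub>m (dims X' i)"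
    by (meson isoE assms(5))
  obtain a2 b2 where ab2: "is_hom n a2 Y Y'" "is_hom n b2 Y' Y"
    "\<And>i. i < n \<Longrightarrow> b2 i * a2 i = 1\<^sub>m (dims Y i)" "\<And>i. i < n \<Longrightarrow> a2 i * b2 i = 1\<^sub>m (dims Y' i)"
    by (meson isoE assms(6))
  have "factors_proj n l (\<lambda>i. a2 i * f i * b1 i) X' Y'"
    using assms(7) is_hom_comp3[OF assms(3,1,2,4) ab1(2) f ab2(1)] unfolding stable_hom_zero_def
      by blast
  from factors_proj_comp[OF assms(1,3,4,2) this ab1(1) ab2(2)]
  show "factors_proj n l f X Y"
  proof (rule factors_proj_cong)
    fix i assume i: "i < n"
    note c = is_hom_carrier[OF ab1(1) i] is_hom_carrier[OF ab1(2) i] is_hom_carrier[OF ab2(1) i]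
      is_hom_carrier[OF ab2(2) i] is_hom_carrier[OF f i]
    have "b2 i * (a2 i * f i * b1 i) * a1 i = (b2 i * a2 i) * f i * (b1 i * a1 i)" using c by simp
    then show "b2 i * (a2 i * f i * b1 i) * a1 i = f i" using ab1(3)[OF i] ab2(3)[OF i] c by simp
  qed
qed

lemma stable_brick_iso:
  assumes X: "is_rep n l X" and iso: "iso n X Y" and Y: "stable_brick n l Y"
  shows "stable_brick n l X"
proof -
  have rY: "is_rep n l Y" and ind: "indecomposable n l X"
    using Y indecomposable_iso[OF X iso] unfolding stable_brick_def indecomposable_def by auto
  obtain a b where ab: "is_hom n a X Y" "is_hom n b Y X"
    "\<And>i. i < n \<Longrightarrow> b i * a i = 1\<^sub>m (dims X i)" "\<And>i. i < n \<Longrightarrow> a i * b i = 1\<^sub>m (dims Y i)"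
    by (meson isoE iso)
  obtain f where f: "is_hom n f Y Y" "\<not> factors_proj n l f Y Y"
    "\<And>g. is_hom n g Y Y \<Longrightarrow> \<exists>c. factors_proj n l (\<lambda>i. g i - c \<cdot>\<^sub>m f i) Y Y"
    using Y unfolding stable_brick_def by blast
  define f' where "f' = (\<lambda>i. b i * f i * a i)"
  have "\<not> factors_proj n l f' X X"
  proof
    assume "factors_proj n l f' X X"
    from factors_proj_comp[OF rY X X rY this ab(2) ab(1)]
    have "factors_proj n l (\<lambda>i. a i * f' i * b i) Y Y" .
    moreover have "a i * f' i * b i = f i" if i: "i < n" for i
    proof -
      note c = is_hom_carrier[OF ab(1) i] is_hom_carrier[OF ab(2) i] is_hom_carrier[OF f(1) i]
      have "a i * f' i * b i = (a i * b i) * f i * (a i * b i)" unfolding f'_def using c by simp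
      then show ?thesis using ab(4)[OF i] c by simp
    qed
    ultimately have "factors_proj n l f Y Y" by (rule factors_proj_cong)
    then show False using f(2) by simp
  qed
  moreover have "\<exists>c. factors_proj n l (\<lambda>i. g i - c \<cdot>\<^sub>m f' i) X X" if g: "is_hom n g X X" for g
  proof -
    obtain c where c: "factors_proj n l (\<lambda>i. a i * g i * b i - c \<cdot>\<^sub>m f i) Y Y"
      using f(3) is_hom_comp3[OF rY X X rY ab(2) g ab(1)] by blast
    have eq: "b i * (a i * g i * b i - c \<cdot>\<^sub>m f i) * a i = g i - c \<cdot>\<^sub>m f' i" if i: "i < n" for i
    proof -
      note cc = is_hom_carrier[OF ab(1) i] is_hom_carrier[OF ab(2) i] is_hom_carrier[OF f(1) i]
        is_hom_carrier[OF g i]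
      have "b i * (a i * g i * b i) * a i = (b i * a i) * g i * (b i * a i)" using cc by simp
      then have "b i * (a i * g i * b i) * a i = g i" using ab(3)[OF i] cc by simp
      moreover have "a i * g i * b i \<in> carrier_mat (dims Y i) (dims Y i)" using cc by simp
      ultimately show ?thesis
        using mult_minus_smult_mult_mat[OF cc(2) _ cc(3) cc(1), of "a i * g i * b i" c]
        unfolding f'_def by simp
    qed
    then show ?thesis
      using factors_proj_cong[OF factors_proj_comp[OF X rY rY X c ab(1) ab(2)] eq] by blast
  qed
  ultimately show ?thesis unfolding stable_brick_def f'_def
    using ind is_hom_comp3[OF X rY rY X ab(1) f(1) ab(2)] by blast
qed

section \<open>Uniserial modules\<close>

definition offset :: "nat \<Rightarrow> nat \<Rightarrow> nat \<Rightarrow> nat" where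
  "offset n t j = nat ((int j - int t) mod int n)"

text \<open>Its composition factors sit at
  positions k < m, position k lying at vertex (t + k) mod n; the basis vector number a at
  vertex j is the one at position offset n t j + n * a, and every arrow moves position k to
  position k + 1.\<close>
definition uniserial_dim :: "nat \<Rightarrow> nat \<Rightarrow> nat \<Rightarrow> nat \<Rightarrow> nat" where
  "uniserial_dim n t m j = (m + n - 1 - offset n t j) div n"

definition uniserial_map :: "nat \<Rightarrow> nat \<Rightarrow> nat \<Rightarrow> nat \<Rightarrow> 'k::field mat" where
  "uniserial_map n t m j = mat (uniserial_dim n t m (nxt n j)) (uniserial_dim n t m j)
     (\<lambda>(a,b). if offset n t (nxt n j) + n*a = offset n t j + n*b + 1 then 1 else 0)"

definition uniserial :: "nat \<Rightarrow> nat \<Rightarrow> nat \<Rightarrow> 'k::field qrep" where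
  "uniserial n t m = \<lparr>dims = uniserial_dim n t m, maps = uniserial_map n t m\<rparr>"

lemma offset_less: "0 < n \<Longrightarrow> offset n t j < n"
  unfolding offset_def by (simp add: nat_less_iff)

lemma offset_self [simp]: "offset n t t = 0"
  unfolding offset_def by simp

lemma mod_eq_offset_iff:
  assumes "0 < n"
  shows "k mod n = offset n t j \<longleftrightarrow> (t + k) mod n = j mod n"
proof -
  have "0 \<le> (int j - int t) mod int n" using assms by simp
  then have "k mod n = offset n t j \<longleftrightarrow> int (k mod n) = (int j - int t) mod int n"
    unfolding offset_def by (metis int_nat_eq nat_int)
  also have "\<dots> \<longleftrightarrow> int n dvd (int k - (int j - int t))" by (simp add: zmod_int mod_eq_dvd_iff)
  also have "\<dots> \<longleftrightarrow> int n dvd (int (t + k) - int j)" by (simp add: algebra_simps)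
  also have "\<dots> \<longleftrightarrow> int ((t + k) mod n) = int (j mod n)" by (simp add: zmod_int mod_eq_dvd_iff)
  finally show ?thesis by (rule trans) (rule of_nat_eq_iff)
qed

lemma offset_decomp: "0 < n \<Longrightarrow> (t + k) mod n = j mod n \<Longrightarrow> offset n t j + n * (k div n) = k"
  using mod_eq_offset_iff[of n k t j] by (metis add.commute div_mult_mod_eq mult.commute)

lemma offset_eq_0_iff:
  assumes "0 < n" "a < n" "b < n"
  shows "offset n a b = 0 \<longleftrightarrow> a = b"
  using mod_eq_offset_iff[OF assms(1), of 0 a b] assms by auto

lemma offset_div: "0 < n \<Longrightarrow> (offset n t j + n * a) div n = a"
  using offset_less[of n t j] by simp

lemma vertex_offset: "0 < n \<Longrightarrow> (t + (offset n t j + n * a)) mod n = j mod n"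
  using mod_eq_offset_iff[of n "offset n t j + n * a" t j] offset_less[of n t j] by simp

lemma mod_add_right_cancel: "(x + s) mod n = (y + s) mod (n::nat) \<Longrightarrow> x mod n = y mod n"
proof -
  assume "(x + s) mod n = (y + s) mod n"
  then have "(int x + int s) mod int n = (int y + int s) mod int n" by (metis of_nat_add zmod_int)
  then have "((int x + int s) mod int n - int s) mod int n = ((int y + int s) mod int n - int s) mod
      int n"
    by simp
  then have "int x mod int n = int y mod int n" by (simp add: mod_diff_left_eq)
  then show ?thesis by (metis of_nat_eq_iff zmod_int)
qed

lemma uniserial_dim_less_iff: "0 < n \<Longrightarrow> q < uniserial_dim n t m j \<longleftrightarrow> offset n t j + n * q < m"
proof -
  assume n: "0 < n"
  have r: "offset n t j < n" using offset_less[OF n] .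
  have "q < uniserial_dim n t m j \<longleftrightarrow> Suc q * n \<le> m + n - 1 - offset n t j"
    unfolding uniserial_dim_def using n
      by (simp add: Suc_le_eq less_eq_div_iff_mult_less_eq flip: Suc_le_eq)
  also have "\<dots> \<longleftrightarrow> offset n t j + n * q < m" using r by (auto simp: algebra_simps)
  finally show ?thesis .
qed

lemma uniserial_dim_top_pos: "0 < n \<Longrightarrow> 0 < m \<Longrightarrow> 0 < uniserial_dim n t m t"
  using uniserial_dim_less_iff[of n 0 t m t] by simp

lemma uniserial_dim_mono: "0 < n \<Longrightarrow> m \<le> m' \<Longrightarrow> a < uniserial_dim n t m j \<Longrightarrow> a < uniserial_dim n t m' j"
  using uniserial_dim_less_iff by (metis order_less_le_trans)

lemma uniserial_dim_Suc:
  assumes n: "0 < n" and j: "j < n"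
  shows "uniserial_dim n t (Suc m) j = uniserial_dim n t m j + (if (t + m) mod n = j then 1 else 0)"
proof -
  let ?r = "offset n t j"
  have r: "?r < n" using offset_less[OF n] .
  define X where "X = m + n - 1 - ?r"
  have X1: "Suc m + n - 1 - ?r = Suc X" unfolding X_def using r by simp
  have "Suc X mod n = 0 \<longleftrightarrow> m mod n = ?r"
  proof
    assume h: "Suc X mod n = 0"
    have "(Suc X + ?r) mod n = (Suc X mod n + ?r) mod n" by (simp add: mod_simps)
    moreover have "Suc X + ?r = m + n" unfolding X_def using r by simp
    ultimately show "m mod n = ?r" using h r by simp
  next
    assume h: "m mod n = ?r"
    have "Suc X = m + (n - ?r)" unfolding X_def using r by simp
    then have "Suc X mod n = (m mod n + (n - ?r)) mod n" by (simp add: mod_simps)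
    then show "Suc X mod n = 0" using h r by simp
  qed
  also have "\<dots> \<longleftrightarrow> (t + m) mod n = j" using mod_eq_offset_iff[OF n] j by simp
  finally show ?thesis unfolding uniserial_dim_def X1 X_def[symmetric] using div_Suc[of X n] by auto
qed

lemma uniserial_dims [simp]: "dims (uniserial n t m) = uniserial_dim n t m"
  and uniserial_maps [simp]: "maps (uniserial n t m) = uniserial_map n t m"
  unfolding uniserial_def by simp_all

lemma uniserial_map_carrier [simp]:
  "uniserial_map n t m j \<in> carrier_mat (uniserial_dim n t m (nxt n j)) (uniserial_dim n t m j)"
  unfolding uniserial_map_def by simp

lemma len_uniserial:
  assumes n: "0 < n"
  shows "len n (uniserial n t m) = m"
proof (induction m)
  case 0
  have "uniserial_dim n t 0 j = 0" for j
    using n offset_less[OF n, of t j] unfolding uniserial_dim_def by simp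
  then show ?case unfolding len_def by simp
next
  case (Suc m)
  have "len n (uniserial n t (Suc m)) = (\<Sum>j<n. uniserial_dim n t m j) +
      (\<Sum>j<n. if (t + m) mod n = j then 1 else 0)"
    unfolding len_def using uniserial_dim_Suc[OF n] by (simp add: sum.distrib)
  then show ?case using Suc n unfolding len_def by simp
qed

lemma nxt_less: "0 < n \<Longrightarrow> nxt n i < n"
  by (simp add: nxt_def)

lemma index_unit_vec_if [simp]: "j < n \<Longrightarrow> unit_vec n i $ j = (if j = i then 1 else 0)"
  by (simp add: unit_vec_def)

lemma uniserial_map_dims [simp]:
  "dim_row (uniserial_map n t m j) = uniserial_dim n t m (nxt n j)" "dim_col (uniserial_map n t m j)
      = uniserial_dim n t m j"
  unfolding uniserial_map_def by simp_all

lemma pathmap_uniserial_carrier: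
  assumes n: "0 < n" and j: "j < n"
  shows "pathmap n (uniserial n t m) j s \<in> carrier_mat (uniserial_dim n t m ((j+s) mod n))
      (uniserial_dim n t m j)"
proof (induction s)
  case 0
  then show ?case using j by simp
next
  case (Suc s)
  have e: "nxt n ((j+s) mod n) = (j + Suc s) mod n" unfolding nxt_def by (simp add: mod_simps)
  show ?case using Suc uniserial_map_carrier[of n t m "(j+s) mod n"] e by auto
qed

lemma sum_eq_delta:
  assumes "finite S" "\<And>c. c \<in> S \<Longrightarrow> f c = (if c = c0 then g else 0)"
  shows "sum f S = (if c0 \<in> S then g else 0)"
proof -
  have "sum f S = (\<Sum>c\<in>S. if c = c0 then g else 0)" using assms(2) by (rule sum.cong[OF refl])
  also have "\<dots> = (if c0 \<in> S then g else 0)" using assms(1) by (simp add: sum.delta')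
  finally show ?thesis .
qed

lemma pathmap_uniserial_index:
  assumes n: "0 < n" and j: "j < n"
  shows "a < uniserial_dim n t m ((j+s) mod n) \<Longrightarrow> b < uniserial_dim n t m j \<Longrightarrow>
    pathmap n (uniserial n t m :: 'k qrep) j s $$ (a,b) =
      (if offset n t ((j+s) mod n) + n*a = offset n t j + n*b + s then (1::'k::field) else 0)"
proof (induction s arbitrary: a)
  case 0
  then show ?case using j n by simp
next
  case (Suc s)
  let ?J = "(j+s) mod n"
  have J: "?J < n" using n by simp
  have e: "nxt n ?J = (j + Suc s) mod n" unfolding nxt_def by (simp add: mod_simps)
  let ?kA = "offset n t (nxt n ?J) + n * a"
  let ?kb = "offset n t j + n * b"
  define c0 where "c0 = (?kb + s) div n"
  have vb: "(t + ?kb) mod n = j" using vertex_offset[OF n, of t j b] j by simp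
  have vbs: "(t + (?kb + s)) mod n = ?J mod n"
  proof -
    have "(t + (?kb + s)) mod n = ((t + ?kb) mod n + s) mod n" by (simp add: mod_simps add.assoc)
    then show ?thesis using vb by simp
  qed
  have c0d: "offset n t ?J + n * c0 = ?kb + s" unfolding c0_def using offset_decomp[OF n vbs] .
  have aU: "a < uniserial_dim n t m (nxt n ?J)" using Suc.prems(1) e by simp
  have kAm: "?kA < m" using aU uniserial_dim_less_iff[OF n] by blast
  have PC: "pathmap n (uniserial n t m :: 'k qrep) j s \<in> carrier_mat (uniserial_dim n t m ?J)
      (uniserial_dim n t m j)" using pathmap_uniserial_carrier[OF n j] .
  have "pathmap n (uniserial n t m :: 'k qrep) j (Suc s) $$ (a,b) =
      ((uniserial_map n t m ?J :: 'k mat) * pathmap n (uniserial n t m :: 'k qrep) j s) $$ (a,b)" by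
          simp
  also have "\<dots> =
      (\<Sum>c\<in>{0..<uniserial_dim n t m ?J}. (uniserial_map n t m ?J :: 'k mat) $$ (a,c) * pathmap n
          (uniserial n t m :: 'k qrep) j s $$ (c,b))"
  proof -
    have d1: "a < dim_row ((uniserial_map n t m ?J :: 'k mat))" "b < dim_col
        (pathmap n (uniserial n t m :: 'k qrep) j s)" using aU Suc.prems(2) carrier_matD[OF PC] by
            auto
    have "((uniserial_map n t m ?J :: 'k mat) * pathmap n (uniserial n t m :: 'k qrep) j s) $$ (a,b)
        = row ((uniserial_map n t m ?J :: 'k mat)) a \<bullet> col
            (pathmap n (uniserial n t m :: 'k qrep) j s) b"
      using index_mult_mat(1)[OF d1] .
    also have "\<dots> =
        (\<Sum>c\<in>{0..<uniserial_dim n t m ?J}. row ((uniserial_map n t m ?J :: 'k mat)) a $ c * col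
            (pathmap n (uniserial n t m :: 'k qrep) j s) b $ c)"
      unfolding scalar_prod_def using PC by simp
    also have "\<dots> =
        (\<Sum>c\<in>{0..<uniserial_dim n t m ?J}. (uniserial_map n t m ?J :: 'k mat) $$ (a,c) * pathmap n
            (uniserial n t m :: 'k qrep) j s $$ (c,b))"
      using d1 PC by (intro sum.cong) auto
    finally show ?thesis .
  qed
  also have "\<dots> =
      (if c0 \<in> {0..<uniserial_dim n t m ?J} then (if ?kA = ?kb + s + 1 then 1 else 0) else 0)"
  proof (rule sum_eq_delta)
    fix c assume c: "c \<in> {0..<uniserial_dim n t m ?J}"
    have ent: "(uniserial_map n t m ?J :: 'k mat) $$ (a,c) =
        (if ?kA = offset n t ?J + n*c + 1 then 1 else 0)"
      using c aU unfolding uniserial_map_def by simp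
    have ent2: "pathmap n (uniserial n t m :: 'k qrep) j s $$ (c,b) =
        (if offset n t ?J + n*c = ?kb + s then 1 else 0)"
      using Suc.IH[of c] c Suc.prems(2) by simp
    have "offset n t ?J + n*c = ?kb + s \<longleftrightarrow> n*c = n*c0"
      using c0d by linarith
    also have "\<dots> \<longleftrightarrow> c = c0" using n by simp
    finally have cc: "offset n t ?J + n*c = ?kb + s \<longleftrightarrow> c = c0" .
    then show "(uniserial_map n t m ?J :: 'k mat) $$ (a,c) * pathmap n (uniserial n t m :: 'k qrep)
        j s $$ (c,b) =
        (if c = c0 then (if ?kA = ?kb + s + 1 then 1 else 0) else 0)"
      using ent ent2 c0d cc by auto
  qed simp
  also have "\<dots> = (if ?kA = ?kb + Suc s then 1 else 0)"
  proof (cases "c0 < uniserial_dim n t m ?J")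
    case False
    then have "\<not> ?kb + s < m" using uniserial_dim_less_iff[OF n, of c0 t m ?J] c0d by simp
    then show ?thesis using False kAm by auto
  qed simp
  finally show ?case using e by simp
qed

lemma is_rep_uniserial:
  assumes n: "0 < n" and m: "m \<le> l + 1"
  shows "is_rep n l (uniserial n t m :: 'k::field qrep)"
  unfolding is_rep_def
proof (intro conjI allI impI)
  fix i assume i: "i < n"
  show "maps (uniserial n t m :: 'k qrep) i \<in> carrier_mat
      (dims (uniserial n t m :: 'k qrep) (nxt n i)) (dims (uniserial n t m :: 'k qrep) i)" by simp
  show "pathmap n (uniserial n t m :: 'k qrep) i (Suc l) = 0\<^sub>m
      (dims (uniserial n t m :: 'k qrep) ((i + Suc l) mod n)) (dims (uniserial n t m :: 'k qrep) i)"
  proof (rule eq_matI)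
    fix a b assume ab: "a < dim_row
        (0\<^sub>m (dims (uniserial n t m :: 'k qrep) ((i + Suc l) mod n))
            (dims (uniserial n t m :: 'k qrep) i) :: 'k mat)"
       "b < dim_col (0\<^sub>m (dims (uniserial n t m :: 'k qrep) ((i + Suc l) mod n))
           (dims (uniserial n t m :: 'k qrep) i) :: 'k mat)"
    then have a: "a < uniserial_dim n t m ((i + Suc l) mod n)" and b: "b < uniserial_dim n t m i"
      by auto
    have "offset n t ((i + Suc l) mod n) + n * a < m" using a uniserial_dim_less_iff[OF n] by blast
    then have "offset n t ((i + Suc l) mod n) + n * a \<noteq> offset n t i + n * b + Suc l" using m
      by linarith
    then show "pathmap n (uniserial n t m :: 'k qrep) i (Suc l) $$ (a, b) = 0\<^sub>m
        (dims (uniserial n t m :: 'k qrep) ((i + Suc l) mod n))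
            (dims (uniserial n t m :: 'k qrep) i) $$ (a, b)"
      using pathmap_uniserial_index[OF n i a b] a b by simp
  qed (use pathmap_uniserial_carrier[OF n i, of t m "Suc l"] in auto)
qed

lemma vertex_offset_add:
  assumes n: "0 < n" and j: "j < n"
  shows "(t + (offset n t j + n * b + s)) mod n = (j + s) mod n"
proof -
  have "(t + (offset n t j + n * b + s)) mod n = ((t + (offset n t j + n * b)) mod n + s) mod n"
    by (simp add: mod_simps add.assoc)
  also have "\<dots> = (j + s) mod n" using vertex_offset[OF n, of t j b] j by simp
  finally show ?thesis .
qed

lemma pathmap_uniserial_mult_vec_index:
  assumes n: "0 < n" and j: "j < n" and z: "z \<in> carrier_vec (uniserial_dim n t m j)"
    and a: "a < uniserial_dim n t m ((j+s) mod n)"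
  shows "(pathmap n (uniserial n t m :: 'k::field qrep) j s *\<^sub>v z) $ a =
     (if s \<le> offset n t ((j+s) mod n) + n*a then z $ ((offset n t ((j+s) mod n) + n*a - s) div n)
         else 0)"
proof -
  let ?P = "pathmap n (uniserial n t m :: 'k qrep) j s"
  let ?kA = "offset n t ((j+s) mod n) + n*a"
  have PC: "?P \<in> carrier_mat (uniserial_dim n t m ((j+s) mod n)) (uniserial_dim n t m j)"
    using pathmap_uniserial_carrier[OF n j] .
  have kAm: "?kA < m" using a uniserial_dim_less_iff[OF n] by blast
  have "(?P *\<^sub>v z) $ a = row ?P a \<bullet> z" using a PC by simp
  also have "\<dots> = (\<Sum>b\<in>{0..<uniserial_dim n t m j}. ?P $$ (a,b) * z $ b)"
    unfolding scalar_prod_def using z PC a by (intro sum.cong) auto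
  also have "\<dots> = (if s \<le> ?kA then z $ ((?kA - s) div n) else 0)"
  proof (cases "s \<le> ?kA")
    case True
    define b0 where "b0 = (?kA - s) div n"
    have v1: "(t + ?kA) mod n = (j + s) mod n" using vertex_offset[OF n, of t "(j+s) mod n" a]
      by simp
    have "((t + (?kA - s)) + s) mod n = (j + s) mod n" using v1 True by simp
    then have v2: "(t + (?kA - s)) mod n = j mod n" by (rule mod_add_right_cancel)
    have b0d: "offset n t j + n * b0 = ?kA - s" unfolding b0_def using offset_decomp[OF n v2] .
    have b0U: "b0 < uniserial_dim n t m j" using uniserial_dim_less_iff[OF n] b0d kAm by simp
    have "(\<Sum>b\<in>{0..<uniserial_dim n t m j}. ?P $$ (a,b) * z $ b) =
        (if b0 \<in> {0..<uniserial_dim n t m j} then z $ b0 else 0)"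
    proof (rule sum_eq_delta)
      fix b assume b: "b \<in> {0..<uniserial_dim n t m j}"
      have "?kA = offset n t j + n*b + s \<longleftrightarrow> n * b = n * b0" using b0d True by linarith
      also have "\<dots> \<longleftrightarrow> b = b0" using n by simp
      finally have cc: "?kA = offset n t j + n*b + s \<longleftrightarrow> b = b0" .
      show "?P $$ (a,b) * z $ b = (if b = b0 then z $ b0 else 0)"
        using pathmap_uniserial_index[OF n j a, of b] b cc by auto
    qed simp
    then show ?thesis using True b0U unfolding b0_def by simp
  next
    case False
    have "(\<Sum>b\<in>{0..<uniserial_dim n t m j}. ?P $$ (a,b) * z $ b) = 0"
    proof (rule sum.neutral, intro ballI)
      fix b assume b: "b \<in> {0..<uniserial_dim n t m j}"
      have "?kA \<noteq> offset n t j + n*b + s" using False by linarith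
      then show "?P $$ (a,b) * z $ b = 0" using pathmap_uniserial_index[OF n j a, of b] b by auto
    qed
    then show ?thesis using False by simp
  qed
  finally show ?thesis .
qed

lemma pathmap_uniserial_unit_vec:
  assumes n: "0 < n" and j: "j < n" and b: "b < uniserial_dim n t m j"
  shows "pathmap n (uniserial n t m :: 'k::field qrep) j s *\<^sub>v unit_vec (uniserial_dim n t m j) b =
     (if offset n t j + n*b + s < m then unit_vec (uniserial_dim n t m ((j+s) mod n))
         ((offset n t j + n*b + s) div n)
      else 0\<^sub>v (uniserial_dim n t m ((j+s) mod n)))"
proof -
  let ?P = "pathmap n (uniserial n t m :: 'k qrep) j s"
  let ?kb = "offset n t j + n*b"
  have PC: "?P \<in> carrier_mat (uniserial_dim n t m ((j+s) mod n)) (uniserial_dim n t m j)"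
    using pathmap_uniserial_carrier[OF n j] .
  have e: "?P *\<^sub>v unit_vec (uniserial_dim n t m j) b = col ?P b"
    using mult_mat_vec_unit_vec[OF PC b] .
  show ?thesis unfolding e
  proof (rule eq_vecI)
    fix a assume "a < dim_vec
        (if ?kb + s < m then unit_vec (uniserial_dim n t m ((j+s) mod n)) ((?kb + s) div n)
      else 0\<^sub>v (uniserial_dim n t m ((j+s) mod n)) :: 'k vec)"
    then have a: "a < uniserial_dim n t m ((j+s) mod n)" by (auto split: if_splits)
    let ?kA = "offset n t ((j+s) mod n) + n*a"
    have kAm: "?kA < m" using a uniserial_dim_less_iff[OF n] by blast
    have ent: "col ?P b $ a = (if ?kA = ?kb + s then 1 else 0)"
      using pathmap_uniserial_index[OF n j a b] a b PC by auto
    show "col ?P b $ a =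
        (if ?kb + s < m then unit_vec (uniserial_dim n t m ((j+s) mod n)) ((?kb + s) div n)
      else 0\<^sub>v (uniserial_dim n t m ((j+s) mod n))) $ a"
    proof (cases "?kb + s < m")
      case True
      have v: "(t + (?kb + s)) mod n = ((j+s) mod n) mod n" using vertex_offset_add[OF n j] by simp
      have d: "offset n t ((j+s) mod n) + n * ((?kb + s) div n) = ?kb + s"
        using offset_decomp[OF n v] .
      have "?kA = ?kb + s \<longleftrightarrow> a = (?kb + s) div n"
      proof
        assume "?kA = ?kb + s"
        then show "a = (?kb + s) div n" using offset_div[OF n, of t "(j+s) mod n" a] by simp
      next
        assume "a = (?kb + s) div n"
        then show "?kA = ?kb + s" using d by simp
      qed
      then show ?thesis using ent True a by auto
    next
      case False
      then show ?thesis using ent kAm a by auto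
    qed
  qed (use PC in auto)
qed

lemma pathmap_uniserial_top:
  assumes n: "0 < n" and t: "t < n" and m: "0 < m"
  shows "pathmap n (uniserial n t m :: 'k::field qrep) t s *\<^sub>v unit_vec (uniserial_dim n t m t) 0 =
     (if s < m then unit_vec (uniserial_dim n t m ((t+s) mod n)) (s div n) else 0\<^sub>v
         (uniserial_dim n t m ((t+s) mod n)))"
proof -
  have eq: "offset n t t + n*0 + s = s" by (simp add: offset_self)
  show ?thesis using pathmap_uniserial_unit_vec[OF n t uniserial_dim_top_pos[OF n m], of s]
    unfolding eq by simp
qed

lemma uniserial_map_unit_vec:
  assumes n: "0 < n" and j: "j < n" and b: "b < uniserial_dim n t m j"
  shows "(uniserial_map n t m j :: 'k::field mat) *\<^sub>v unit_vec (uniserial_dim n t m j) b =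
     (if offset n t j + n*b + 1 < m then unit_vec (uniserial_dim n t m (nxt n j))
         ((offset n t j + n*b + 1) div n)
      else 0\<^sub>v (uniserial_dim n t m (nxt n j)))"
proof -
  have "pathmap n (uniserial n t m :: 'k qrep) j 1 = uniserial_map n t m j"
    using j uniserial_map_carrier[of n t m j] by simp
  then show ?thesis using pathmap_uniserial_unit_vec[OF n j b, of 1] j unfolding nxt_def by simp
qed

text \<open>The universal property of uniserial n t m: it is generated by its top vector, subject only
  to the vanishing of the paths of length m.\<close>
lemma uniserial_hom_exists:
  assumes n: "0 < n" and t: "t < n" and m: "0 < m" and Y: "is_rep n l Y"
    and y: "y \<in> carrier_vec (dims Y t)"
    and py: "pathmap n Y t m *\<^sub>v y = 0\<^sub>v (dims Y ((t+m) mod n))"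
  shows "\<exists>h. is_hom n h (uniserial n t m :: 'k::field qrep) Y \<and> h t *\<^sub>v unit_vec
      (uniserial_dim n t m t) 0 = y"
proof -
  define h where "h =
      (\<lambda>j. mat (dims Y j) (uniserial_dim n t m j)
          (\<lambda>(c,b). (pathmap n Y t (offset n t j + n*b) *\<^sub>v y) $ c))"
  have hc: "\<And>j. h j \<in> carrier_mat (dims Y j) (uniserial_dim n t m j)" unfolding h_def by simp
  have PY: "\<And>s. pathmap n Y t s \<in> carrier_mat (dims Y ((t+s) mod n)) (dims Y t)"
    using pathmap_carrier[OF Y t] .
  have hcol: "\<And>j b. j < n \<Longrightarrow> b < uniserial_dim n t m j \<Longrightarrow> h j *\<^sub>v unit_vec (uniserial_dim n t m j) b =
      pathmap n Y t (offset n t j + n*b) *\<^sub>v y"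
  proof -
    fix j b assume j: "j < n" and b: "b < uniserial_dim n t m j"
    have v: "(t + (offset n t j + n*b)) mod n = j" using vertex_offset[OF n, of t j b] j by simp
    have d: "pathmap n Y t (offset n t j + n*b) *\<^sub>v y \<in> carrier_vec (dims Y j)"
      using PY[of "offset n t j + n*b"] y v by (metis mult_mat_vec_carrier)
    show "h j *\<^sub>v unit_vec (uniserial_dim n t m j) b = pathmap n Y t (offset n t j + n*b) *\<^sub>v y"
    proof -
      have dr: "dim_row (pathmap n Y t (offset n t j + n*b)) = dims Y j"
        using PY[of "offset n t j + n*b"] v by simp
      show ?thesis unfolding mult_mat_vec_unit_vec[OF hc b] using d b dr
        by (intro eq_vecI) (auto simp: h_def)
    qed
  qed
  have hom: "is_hom n h (uniserial n t m :: 'k qrep) Y"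
    unfolding is_hom_def
  proof (intro conjI allI impI)
    fix j assume j: "j < n"
    show "h j \<in> carrier_mat (dims Y j) (dims (uniserial n t m :: 'k qrep) j)" using hc by simp
    have nj: "nxt n j < n" using nxt_less[OF n] .
    have mY: "maps Y j \<in> carrier_mat (dims Y (nxt n j)) (dims Y j)" using Y j unfolding is_rep_def
      by simp
    show "h (nxt n j) * maps (uniserial n t m :: 'k qrep) j = maps Y j * h j"
    proof (rule mat_eq_unit_vecI[of _ "dims Y (nxt n j)" "uniserial_dim n t m j"])
      show "h (nxt n j) * maps (uniserial n t m :: 'k qrep) j \<in> carrier_mat (dims Y (nxt n j))
          (uniserial_dim n t m j)"
        using hc[of "nxt n j"] by simp
      show "maps Y j * h j \<in> carrier_mat (dims Y (nxt n j)) (uniserial_dim n t m j)"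
        using hc[of j] mY by simp
      fix b assume b: "b < uniserial_dim n t m j"
      let ?kb = "offset n t j + n*b"
      have kbm: "?kb < m" using b uniserial_dim_less_iff[OF n] by blast
      have vj: "(t + ?kb) mod n = j" using vertex_offset[OF n, of t j b] j by simp
      have RHS: "(maps Y j * h j) *\<^sub>v unit_vec (uniserial_dim n t m j) b = pathmap n Y t (Suc ?kb) *\<^sub>v
          y"
      proof -
        have "(maps Y j * h j) *\<^sub>v unit_vec (uniserial_dim n t m j) b = maps Y j *\<^sub>v
            (h j *\<^sub>v unit_vec (uniserial_dim n t m j) b)"
          using mY hc[of j] by simp
        also have "\<dots> = maps Y j *\<^sub>v (pathmap n Y t ?kb *\<^sub>v y)" using hcol[OF j b] by simp
        also have "\<dots> = (maps Y j * pathmap n Y t ?kb) *\<^sub>v y" using mY PY[of ?kb] y vj by simp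
        also have "\<dots> = pathmap n Y t (Suc ?kb) *\<^sub>v y" using vj by simp
        finally show ?thesis .
      qed
      have LHS: "(h (nxt n j) * maps (uniserial n t m :: 'k qrep) j) *\<^sub>v unit_vec
          (uniserial_dim n t m j) b
          = h (nxt n j) *\<^sub>v (uniserial_map n t m j *\<^sub>v unit_vec (uniserial_dim n t m j) b)"
        using hc[of "nxt n j"] by simp
      show "(h (nxt n j) * maps (uniserial n t m :: 'k qrep) j) *\<^sub>v unit_vec (uniserial_dim n t m j)
          b =
            (maps Y j * h j) *\<^sub>v unit_vec (uniserial_dim n t m j) b"
      proof (cases "?kb + 1 < m")
        case True
        have vn: "(t + (?kb + 1)) mod n = nxt n j mod n"
        proof -
          have "(t + (?kb + 1)) mod n = ((t + ?kb) mod n + 1) mod n"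
            by (simp add: mod_simps add.assoc)
          then show ?thesis using vj unfolding nxt_def by simp
        qed
        have dd: "offset n t (nxt n j) + n * ((?kb + 1) div n) = ?kb + 1"
          using offset_decomp[OF n vn] .
        have bb: "(?kb + 1) div n < uniserial_dim n t m (nxt n j)"
          using uniserial_dim_less_iff[OF n] dd True by simp
        have "h (nxt n j) *\<^sub>v (uniserial_map n t m j *\<^sub>v unit_vec (uniserial_dim n t m j) b)
            = h (nxt n j) *\<^sub>v unit_vec (uniserial_dim n t m (nxt n j)) ((?kb + 1) div n)"
          using uniserial_map_unit_vec[where 'k='k, OF n j b] True by simp
        also have "\<dots> = pathmap n Y t (?kb + 1) *\<^sub>v y" using hcol[OF nj bb] dd by simp
        finally show ?thesis using LHS RHS by simp
      next
        case False
        then have km: "Suc ?kb = m" using kbm by simp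
        have "h (nxt n j) *\<^sub>v (uniserial_map n t m j *\<^sub>v unit_vec (uniserial_dim n t m j) b) = 0\<^sub>v
            (dims Y (nxt n j))"
          using uniserial_map_unit_vec[where 'k='k, OF n j b] False mult_mat_vec_zero[OF hc[of "nxt
              n j"]] by simp
        moreover have "(t + m) mod n = nxt n j"
        proof -
          have "t + m = (t + ?kb) + 1" using km by simp
          then have "(t + m) mod n = ((t + ?kb) mod n + 1) mod n" by (simp add: mod_simps)
          then show ?thesis using vj unfolding nxt_def by simp
        qed
        ultimately show ?thesis using LHS RHS km py by simp
      qed
    qed
  qed
  have "h t *\<^sub>v unit_vec (uniserial_dim n t m t) 0 = y"
    using hcol[OF t uniserial_dim_top_pos[OF n m]] y t by (simp add: offset_self)
  then show ?thesis using hom by blast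
qed

lemma uniserial_hom_unit_vec:
  assumes n: "0 < n" and t: "t < n" and m: "0 < m" and Y: "is_rep n l Y"
    and h: "is_hom n h (uniserial n t m :: 'k::field qrep) Y" and j: "j < n"
      and b: "b < uniserial_dim n t m j"
  shows "h j *\<^sub>v unit_vec (uniserial_dim n t m j) b = pathmap n Y t (offset n t j + n*b) *\<^sub>v
      (h t *\<^sub>v unit_vec (uniserial_dim n t m t) 0)"
proof -
  let ?kb = "offset n t j + n*b"
  have UR: "is_rep n m (uniserial n t m :: 'k qrep)" using is_rep_uniserial[OF n, of m m] by simp
  have kbm: "?kb < m" using b uniserial_dim_less_iff[OF n] by blast
  have vj: "(t + ?kb) mod n = j" using vertex_offset[OF n, of t j b] j by simp
  have e0: "unit_vec (uniserial_dim n t m t) 0 \<in> carrier_vec (dims (uniserial n t m :: 'k qrep) t)"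
    by simp
  have "h ((t + ?kb) mod n) *\<^sub>v
      (pathmap n (uniserial n t m :: 'k qrep) t ?kb *\<^sub>v unit_vec (uniserial_dim n t m t) 0)
      = pathmap n Y t ?kb *\<^sub>v (h t *\<^sub>v unit_vec (uniserial_dim n t m t) 0)"
    using is_hom_pathmap_vec[OF UR Y h t e0] .
  moreover have "pathmap n (uniserial n t m :: 'k qrep) t ?kb *\<^sub>v unit_vec (uniserial_dim n t m t) 0
      = unit_vec (uniserial_dim n t m j) b"
    using pathmap_uniserial_top[where 'k='k, OF n t m, of ?kb] kbm vj offset_div[OF n, of t j b]
      by simp
  ultimately show ?thesis using vj by simp
qed

lemma uniserial_hom_eqI:
  assumes n: "0 < n" and t: "t < n" and m: "0 < m" and Y: "is_rep n l Y"
    and h: "is_hom n h (uniserial n t m :: 'k::field qrep) Y"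
      and h': "is_hom n h' (uniserial n t m :: 'k::field qrep) Y"
    and e: "h t *\<^sub>v unit_vec (uniserial_dim n t m t) 0 = h' t *\<^sub>v unit_vec (uniserial_dim n t m t) 0"
    and j: "j < n"
  shows "h j = h' j"
proof (rule mat_eq_unit_vecI[of _ "dims Y j" "uniserial_dim n t m j"])
  show "h j \<in> carrier_mat (dims Y j) (uniserial_dim n t m j)" using is_hom_carrier[OF h j] by simp
  show "h' j \<in> carrier_mat (dims Y j) (uniserial_dim n t m j)" using is_hom_carrier[OF h' j] by simp
  fix b assume b: "b < uniserial_dim n t m j"
  show "h j *\<^sub>v unit_vec (uniserial_dim n t m j) b = h' j *\<^sub>v unit_vec (uniserial_dim n t m j) b"
    using uniserial_hom_unit_vec[OF n t m Y h j b] uniserial_hom_unit_vec[OF n t m Y h' j b] e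
      by simp
qed

lemma is_rep_pathmap_mult_vec_zero:
  assumes X: "is_rep n l X" and t: "t < n" and x: "x \<in> carrier_vec (dims X t)"
  shows "pathmap n X t (l+1) *\<^sub>v x = 0\<^sub>v (dims X ((t + (l+1)) mod n))"
proof -
  have "pathmap n X t (Suc l) = 0\<^sub>m (dims X ((t + Suc l) mod n)) (dims X t)" using X t
    unfolding is_rep_def by simp
  then show ?thesis using zero_mult_mat_vec[OF x] by simp
qed

lemma projective_uniserial:
  assumes n: "0 < n" and t: "t < n"
  shows "projective n l (uniserial n t (l+1) :: 'k::field qrep)"
  unfolding projective_def
proof (intro conjI allI impI)
  show UR: "is_rep n l (uniserial n t (l+1) :: 'k qrep)"
    using is_rep_uniserial[where 'k='k, OF n, of "l+1" l t] by simp
  fix X Y :: "'k qrep" and g f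
  assume X: "is_rep n l X" and Y: "is_rep n l Y" and g: "is_epi n g X Y"
    and f: "is_hom n f (uniserial n t (l+1)) Y"
  let ?e = "unit_vec (uniserial_dim n t (l+1) t) 0 :: 'k vec"
  have gh: "is_hom n g X Y" using g unfolding is_epi_def by simp
  have yc: "f t *\<^sub>v ?e \<in> carrier_vec (dims Y t)" using is_hom_carrier[OF f t] by simp
  obtain x where x: "x \<in> carrier_vec (dims X t)" "g t *\<^sub>v x = f t *\<^sub>v ?e"
    using g t yc unfolding is_epi_def by blast
  obtain h where h: "is_hom n h (uniserial n t (l+1) :: 'k qrep) X" "h t *\<^sub>v ?e = x"
    using uniserial_hom_exists[OF n t _ X x(1) is_rep_pathmap_mult_vec_zero[OF X t x(1)]] by auto
  have gh2: "is_hom n (\<lambda>i. g i * h i) (uniserial n t (l+1) :: 'k qrep) Y"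
    using is_hom_comp[OF UR X Y h(1) gh] .
  have "(g t * h t) *\<^sub>v ?e = f t *\<^sub>v ?e"
    using x h(2) is_hom_carrier[OF gh t] is_hom_carrier[OF h(1) t] by simp
  then have "\<forall>i<n. g i * h i = f i"
    using uniserial_hom_eqI[OF n t _ Y gh2 f] by auto
  then show "\<exists>h. is_hom n h (uniserial n t (l+1)) X \<and> (\<forall>i<n. g i * h i = f i)" using h(1) by blast
qed

lemma uniserial_truncation_hom:
  assumes n: "0 < n" and t: "t < n" and m2: "0 < m2" "m2 \<le> l + 1"
  shows "\<exists>p. is_hom n p (uniserial n t (l+1) :: 'k::field qrep) (uniserial n t m2) \<and>
     (\<forall>j<n. \<forall>w \<in> carrier_vec (uniserial_dim n t (l+1) j). \<forall>a < uniserial_dim n t m2 j. (p j *\<^sub>v w) $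
         a = w $ a)"
proof -
  have U2: "is_rep n l (uniserial n t m2 :: 'k qrep)" using is_rep_uniserial[OF n m2(2)] .
  have z: "pathmap n (uniserial n t m2 :: 'k qrep) t (l+1) *\<^sub>v unit_vec (uniserial_dim n t m2 t) 0 =
      0\<^sub>v (dims (uniserial n t m2 :: 'k qrep) ((t + (l+1)) mod n))"
    using pathmap_uniserial_top[where 'k='k, OF n t m2(1), of "l+1"] m2(2) by simp
  obtain p where p: "is_hom n p (uniserial n t (l+1) :: 'k qrep) (uniserial n t m2)" "p t *\<^sub>v
      unit_vec (uniserial_dim n t (l+1) t) 0 = unit_vec (uniserial_dim n t m2 t) 0"
    using uniserial_hom_exists[OF n t _ U2 _ z] by auto
  have col: "\<And>j b. j < n \<Longrightarrow> b < uniserial_dim n t (l+1) j \<Longrightarrow> p j *\<^sub>v unit_vec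
      (uniserial_dim n t (l+1) j) b =
      (if b < uniserial_dim n t m2 j then unit_vec (uniserial_dim n t m2 j) b else 0\<^sub>v
          (uniserial_dim n t m2 j))"
  proof -
    fix j b assume j: "j < n" and b: "b < uniserial_dim n t (l+1) j"
    have v: "(t + (offset n t j + n*b)) mod n = j" using vertex_offset[OF n, of t j b] j by simp
    have "p j *\<^sub>v unit_vec (uniserial_dim n t (l+1) j) b = pathmap n (uniserial n t m2 :: 'k qrep) t
        (offset n t j + n*b) *\<^sub>v unit_vec (uniserial_dim n t m2 t) 0"
      using uniserial_hom_unit_vec[OF n t _ U2 p(1) j b] p(2) by simp
    also have "\<dots> =
        (if offset n t j + n*b < m2 then unit_vec (uniserial_dim n t m2 j) b else 0\<^sub>v
            (uniserial_dim n t m2 j))"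
      using pathmap_uniserial_top[where 'k='k, OF n t m2(1), of "offset n t j + n*b"] v
          offset_div[OF n, of t j b] by simp
    finally show "p j *\<^sub>v unit_vec (uniserial_dim n t (l+1) j) b =
      (if b < uniserial_dim n t m2 j then unit_vec (uniserial_dim n t m2 j) b else 0\<^sub>v
          (uniserial_dim n t m2 j))"
      using uniserial_dim_less_iff[OF n, of b t m2 j] by simp
  qed
  have "\<forall>j<n. \<forall>w \<in> carrier_vec (uniserial_dim n t (l+1) j). \<forall>a < uniserial_dim n t m2 j. (p j *\<^sub>v w)
      $ a = w $ a"
  proof (intro allI impI ballI)
    fix j and w :: "'k vec" and a assume j: "j < n"
      and w: "w \<in> carrier_vec (uniserial_dim n t (l+1) j)" and a: "a < uniserial_dim n t m2 j"
    have pc: "p j \<in> carrier_mat (uniserial_dim n t m2 j) (uniserial_dim n t (l+1) j)"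
      using is_hom_carrier[OF p(1) j] by simp
    have aP: "a < uniserial_dim n t (l+1) j" using uniserial_dim_mono[OF n m2(2) a] .
    have "(p j *\<^sub>v w) $ a = row (p j) a \<bullet> w" using pc a by simp
    also have "\<dots> = (\<Sum>b\<in>{0..<uniserial_dim n t (l+1) j}. p j $$ (a,b) * w $ b)"
      unfolding scalar_prod_def using w pc a by (intro sum.cong) auto
    also have "\<dots> = (if a \<in> {0..<uniserial_dim n t (l+1) j} then w $ a else 0)"
    proof (rule sum_eq_delta)
      fix b assume b: "b \<in> {0..<uniserial_dim n t (l+1) j}"
      have "p j $$ (a,b) = col (p j) b $ a" using pc a b by simp
      also have "\<dots> = (p j *\<^sub>v unit_vec (uniserial_dim n t (l+1) j) b) $ a"
        using mult_mat_vec_unit_vec[OF pc, of b] b by simp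
      also have "\<dots> = (if b = a then 1 else 0)" using col[OF j, of b] b a by auto
      finally show "p j $$ (a,b) * w $ b = (if b = a then w $ a else 0)" by simp
    qed simp
    finally show "(p j *\<^sub>v w) $ a = w $ a" using aP by simp
  qed
  then show ?thesis using p(1) by blast
qed

lemma uniserial_not_iso:
  assumes n: "0 < n" and t1: "t1 < n" and t2: "t2 < n" and ne: "t1 \<noteq> t2" and m: "0 < m"
  shows "\<not> iso n (uniserial n t1 m :: 'k::field qrep) (uniserial n t2 m)"
proof
  assume "iso n (uniserial n t1 m :: 'k::field qrep) (uniserial n t2 m)"
  then obtain f g where fg: "is_hom n f (uniserial n t1 m :: 'k qrep) (uniserial n t2 m)" "is_hom n
      g (uniserial n t2 m :: 'k qrep) (uniserial n t1 m)"
    "\<forall>i<n. g i * f i = 1\<^sub>m (uniserial_dim n t1 m i) \<and> f i * g i = 1\<^sub>m (uniserial_dim n t2 m i)"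
    unfolding iso_def by auto
  let ?U1 = "uniserial n t1 m :: 'k qrep" and ?U2 = "uniserial n t2 m :: 'k qrep"
  let ?e = "unit_vec (uniserial_dim n t1 m t1) 0 :: 'k vec"
  obtain s0 where ms: "m = Suc s0" using m by (cases m) auto
  let ?s = "s0"
  let ?J = "(t1 + ?s) mod n"
  have J: "?J < n" using n by simp
  have R1: "is_rep n m ?U1" using is_rep_uniserial[OF n, of m m] by simp
  have R2: "is_rep n m ?U2" using is_rep_uniserial[OF n, of m m] by simp
  have sm: "?s < m" using ms by simp
  have v: "(t1 + ?s) mod n = ?J mod n" by simp
  have d: "offset n t1 ?J + n * (?s div n) = ?s" using offset_decomp[OF n v] .
  have idx: "?s div n < uniserial_dim n t1 m ?J" using uniserial_dim_less_iff[OF n] d sm by simp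
  define p where "p = pathmap n ?U2 t1 ?s *\<^sub>v (f t1 *\<^sub>v ?e)"
  have p1: "p = f ?J *\<^sub>v unit_vec (uniserial_dim n t1 m ?J) (?s div n)"
  proof -
    have "f ?J *\<^sub>v (pathmap n ?U1 t1 ?s *\<^sub>v ?e) = p"
      unfolding p_def using is_hom_pathmap_vec[OF R1 R2 fg(1) t1, of ?e ?s] by simp
    moreover have "pathmap n ?U1 t1 ?s *\<^sub>v ?e = unit_vec (uniserial_dim n t1 m ?J) (?s div n)"
      using pathmap_uniserial_top[where 'k='k, OF n t1 m, of ?s] sm by simp
    ultimately show ?thesis by simp
  qed
  have "g ?J *\<^sub>v p = unit_vec (uniserial_dim n t1 m ?J) (?s div n)"
  proof -
    have "g ?J *\<^sub>v p = (g ?J * f ?J) *\<^sub>v unit_vec (uniserial_dim n t1 m ?J) (?s div n)"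
      unfolding p1 using assoc_mult_mat_vec[OF is_hom_carrier[OF fg(2) J] is_hom_carrier[OF fg(1)
          J], of "unit_vec (uniserial_dim n t1 m ?J) (?s div n)"]
      by simp
    also have "\<dots> = unit_vec (uniserial_dim n t1 m ?J) (?s div n)" using fg(3) J by simp
    finally show ?thesis .
  qed
  moreover have "p = 0\<^sub>v (uniserial_dim n t2 m ?J)"
  proof (rule eq_vecI)
    have fe: "f t1 *\<^sub>v ?e \<in> carrier_vec (uniserial_dim n t2 m t1)" using is_hom_carrier[OF fg(1) t1]
      by simp
    show "dim_vec p = dim_vec (0\<^sub>v (uniserial_dim n t2 m ?J) :: 'k vec)"
    proof -
      have "pathmap n ?U2 t1 ?s \<in> carrier_mat (uniserial_dim n t2 m ?J) (uniserial_dim n t2 m t1)"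
        by (rule pathmap_uniserial_carrier[OF n t1])
      then show ?thesis unfolding p_def by simp
    qed
    fix a assume "a < dim_vec (0\<^sub>v (uniserial_dim n t2 m ?J) :: 'k vec)"
    then have a: "a < uniserial_dim n t2 m ?J" by simp
    let ?k = "offset n t2 ?J + n*a"
    have km: "?k < m" using a uniserial_dim_less_iff[OF n] by blast
    have "\<not> ?s \<le> ?k"
    proof
      assume "?s \<le> ?k"
      then have ks: "?k = ?s" using km ms by linarith
      have "(t2 + ?k) mod n = ?J" using vertex_offset[OF n, of t2 ?J a] by simp
      then have "(t2 + ?s) mod n = (t1 + ?s) mod n" using ks by simp
      then have "t2 mod n = t1 mod n" by (rule mod_add_right_cancel)
      then show False using t1 t2 ne by simp
    qed
    then show "p $ a = 0\<^sub>v (uniserial_dim n t2 m ?J) $ a"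
      unfolding p_def using pathmap_uniserial_mult_vec_index[where 'k='k, OF n t1 fe a] a by simp
  qed
  moreover have "g ?J *\<^sub>v 0\<^sub>v (uniserial_dim n t2 m ?J) = 0\<^sub>v (uniserial_dim n t1 m ?J)"
    using mult_mat_vec_zero[OF is_hom_carrier[OF fg(2) J]] by simp
  moreover have "unit_vec (uniserial_dim n t1 m ?J) (?s div n) \<noteq>
      (0\<^sub>v (uniserial_dim n t1 m ?J) :: 'k vec)"
    using idx by (metis index_unit_vec(2) index_zero_vec(1) zero_neq_one)
  ultimately show False by simp
qed

lemma uniserial_truncation:
  assumes n: "0 < n" and t: "t < n" and m: "0 < m" "m \<le> l + 1"
  obtains p where "is_epi n p (uniserial n t (l+1)) (uniserial n t m)"
    "\<And>j w a. j < n \<Longrightarrow> w \<in> carrier_vec (uniserial_dim n t (l+1) j) \<Longrightarrow> a < uniserial_dim n t m j \<Longrightarrow>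
      (p j *\<^sub>v w) $ a = w $ a"
proof -
  obtain p where p: "is_hom n p (uniserial n t (l+1) :: 'a qrep) (uniserial n t m)"
     "\<forall>j<n. \<forall>w \<in> carrier_vec (uniserial_dim n t (l+1) j). \<forall>a < uniserial_dim n t m j. (p j *\<^sub>v w) $ a
         = w $ a"
    using uniserial_truncation_hom[OF n t m] by blast
  have "is_epi n p (uniserial n t (l+1)) (uniserial n t m)"
    unfolding is_epi_def
  proof (intro conjI allI impI ballI p(1))
    fix j and y :: "'a vec" assume j: "j < n" and y: "y \<in> carrier_vec (dims (uniserial n t m) j)"
    define w where "w = vec (uniserial_dim n t (l+1) j)
        (\<lambda>c. if c < uniserial_dim n t m j then y $ c else 0)"
    have w: "w \<in> carrier_vec (dims (uniserial n t (l+1)) j)" unfolding w_def by simp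
    have "p j *\<^sub>v w = y"
    proof (rule eq_vecI)
      show "dim_vec (p j *\<^sub>v w) = dim_vec y" using is_hom_carrier[OF p(1) j] y by simp
      fix a assume "a < dim_vec y"
      then have a: "a < uniserial_dim n t m j" using y by simp
      have "a < uniserial_dim n t (l+1) j" using uniserial_dim_mono[OF n m(2) a] .
      then show "(p j *\<^sub>v w) $ a = y $ a" using p(2) j w a unfolding w_def by simp
    qed
    then show "\<exists>x\<in>carrier_vec (dims (uniserial n t (l+1)) j). p j *\<^sub>v x = y" using w by blast
  qed
  then show ?thesis using that p(2) by blast
qed

section \<open>Morphisms between uniserial modules modulo projectives\<close>

lemma pathmap_uniserial_mult_vec_eq_zero_iff:
  assumes n: "0 < n" and j: "j < n" and z: "z \<in> carrier_vec (uniserial_dim n t m j)"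
  shows "pathmap n (uniserial n t m) j s *\<^sub>v z = 0\<^sub>v (uniserial_dim n t m ((j+s) mod n)) \<longleftrightarrow>
    (\<forall>q < uniserial_dim n t m j. offset n t j + n*q + s < m \<longrightarrow> z $ q = (0::'k::field))"
    (is "?P *\<^sub>v z = _ \<longleftrightarrow> _")
proof -
  let ?J = "(j+s) mod n"
  have PC: "?P \<in> carrier_mat (uniserial_dim n t m ?J) (uniserial_dim n t m j)"
    using pathmap_uniserial_carrier[OF n j] .
  have coord: "(offset n t j + n*q + s) div n < uniserial_dim n t m ?J
      \<and> (?P *\<^sub>v z) $ ((offset n t j + n*q + s) div n) = z $ q"
    if q: "q < uniserial_dim n t m j" "offset n t j + n*q + s < m" for q
  proof -
    have d: "offset n t ?J + n * ((offset n t j + n*q + s) div n) = offset n t j + n*q + s"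
      using offset_decomp[OF n, of t "offset n t j + n*q + s" "(j+s) mod n"] vertex_offset_add[OF n
          j, of t q s]
      by simp
    then have "(offset n t j + n*q + s) div n < uniserial_dim n t m ?J"
      using q(2) uniserial_dim_less_iff[OF n] by simp
    then show ?thesis using pathmap_uniserial_mult_vec_index[OF n j z] d offset_div[OF n] by simp
  qed
  have source: "\<exists>q < uniserial_dim n t m j. offset n t j + n*q + s < m \<and> (?P *\<^sub>v z) $ a = z $ q"
    if a: "a < uniserial_dim n t m ?J" and ne: "(?P *\<^sub>v z) $ a \<noteq> 0" for a
  proof -
    let ?ka = "offset n t ?J + n*a"
    have s: "s \<le> ?ka" using ne pathmap_uniserial_mult_vec_index[OF n j z a]
      by (auto split: if_splits)
    have "t + (?ka - s) + s = t + ?ka" using s by simp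
    then have "((t + (?ka - s)) + s) mod n = (j + s) mod n" using vertex_offset[OF n, of t ?J a]
      by simp
    then have "(t + (?ka - s)) mod n = j mod n" by (rule mod_add_right_cancel)
    then have d: "offset n t j + n * ((?ka - s) div n) = ?ka - s" by (rule offset_decomp[OF n])
    have "?ka < m" using a uniserial_dim_less_iff[OF n] by blast
    then show ?thesis
      using d s pathmap_uniserial_mult_vec_index[OF n j z a] uniserial_dim_less_iff[OF n]
      by (intro exI[of _ "(?ka - s) div n"]) simp
  qed
  show ?thesis
  proof
    assume zero: "?P *\<^sub>v z = 0\<^sub>v (uniserial_dim n t m ?J)"
    show "\<forall>q < uniserial_dim n t m j. offset n t j + n*q + s < m \<longrightarrow> z $ q = 0"
    proof (intro allI impI)
      fix q assume q: "q < uniserial_dim n t m j" "offset n t j + n*q + s < m"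
      let ?i = "(offset n t j + n*q + s) div n"
      have "z $ q = (?P *\<^sub>v z) $ ?i" using conjunct2[OF coord[OF q]] by simp
      also have "\<dots> = 0\<^sub>v (uniserial_dim n t m ?J) $ ?i" unfolding zero ..
      also have "\<dots> = 0" using conjunct1[OF coord[OF q]] by simp
      finally show "z $ q = 0" .
    qed
  next
    assume zero: "\<forall>q < uniserial_dim n t m j. offset n t j + n*q + s < m \<longrightarrow> z $ q = 0"
    show "?P *\<^sub>v z = 0\<^sub>v (uniserial_dim n t m ?J)"
    proof (rule eq_vecI)
      fix a assume "a < dim_vec (0\<^sub>v (uniserial_dim n t m ?J) :: 'k vec)"
      then have a: "a < uniserial_dim n t m ?J" by simp
      show "(?P *\<^sub>v z) $ a = 0\<^sub>v (uniserial_dim n t m ?J) $ a"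
      proof (rule ccontr)
        assume "(?P *\<^sub>v z) $ a \<noteq> 0\<^sub>v (uniserial_dim n t m ?J) $ a"
        then have "(?P *\<^sub>v z) $ a \<noteq> 0" using a by simp
        then obtain q where "q < uniserial_dim n t m j" "offset n t j + n*q + s < m" "(?P *\<^sub>v z) $ a
            = z $ q"
          using source[OF a] by blast
        then show False using zero \<open>(?P *\<^sub>v z) $ a \<noteq> 0\<close> by simp
      qed
    qed (use PC in simp)
  qed
qed

lemma factors_proj_iff_lift:
  assumes P: "projective n l P" and X: "is_rep n l X" and Y: "is_rep n l Y" and p: "is_epi n p P Y"
  shows "factors_proj n l h X Y \<longleftrightarrow> (\<exists>g. is_hom n g X P \<and> (\<forall>i<n. h i = p i * g i))"
proof
  assume "factors_proj n l h X Y"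
  then obtain Q g b where Q: "projective n l Q" "is_hom n g X Q" "is_hom n b Q Y" "\<forall>i<n. h i = b i *
      g i"
    unfolding factors_proj_def by blast
  have RP: "is_rep n l P" and RQ: "is_rep n l Q" using P Q(1) unfolding projective_def by auto
  obtain b' where b': "is_hom n b' Q P" "\<forall>i<n. p i * b' i = b i"
    using projectiveD[OF Q(1) RP Y p Q(3)] by blast
  have p': "is_hom n p P Y" using p unfolding is_epi_def by simp
  have "h i = p i * (b' i * g i)" if i: "i < n" for i
  proof -
    have "h i = (p i * b' i) * g i" using Q(4) b'(2) i by simp
    then show ?thesis
      using is_hom_carrier[OF Q(2) i] is_hom_carrier[OF b'(1) i] is_hom_carrier[OF p' i] by simp
  qed
  then show "\<exists>g. is_hom n g X P \<and> (\<forall>i<n. h i = p i * g i)"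
    using is_hom_comp[OF X RQ RP Q(2) b'(1)] by blast
next
  assume "\<exists>g. is_hom n g X P \<and> (\<forall>i<n. h i = p i * g i)"
  then show "factors_proj n l h X Y"
    unfolding factors_proj_def using P p unfolding is_epi_def by blast
qed

lemma uniserial_hom_top_killed:
  assumes n: "0 < n" and t: "t < n" and m: "0 < m" "m \<le> l + 1"
    and Y: "is_rep n l (Y :: 'k::field qrep)"
    and g: "is_hom n g (uniserial n t m) Y"
  shows "pathmap n Y t m *\<^sub>v (g t *\<^sub>v unit_vec (uniserial_dim n t m t) 0) = 0\<^sub>v
      (dims Y ((t + m) mod n))"
proof -
  let ?J = "(t + m) mod n" and ?e = "unit_vec (uniserial_dim n t m t) 0"
  have "pathmap n Y t m *\<^sub>v (g t *\<^sub>v ?e) = g ?J *\<^sub>v (pathmap n (uniserial n t m) t m *\<^sub>v ?e)"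
    using is_hom_pathmap_vec[OF is_rep_uniserial[OF n m(2)] Y g t, of ?e m] by simp
  also have "\<dots> = g ?J *\<^sub>v 0\<^sub>v (uniserial_dim n t m ?J)"
    using pathmap_uniserial_top[where 'k='k, OF n t m(1), of m] by simp
  also have "\<dots> = 0\<^sub>v (dims Y ?J)"
    using mult_mat_vec_zero[OF is_hom_carrier[OF g, of ?J]] n by simp
  finally show ?thesis .
qed

text \<open>A morphism into a module of length m2 factors through a projective iff it lifts to the
  projective cover of length l + 1; lifting its top vector to the cover is possible iff it
  vanishes at every position that would survive a path of length m1 in the cover.\<close>
lemma factors_proj_uniserial_iff:
  assumes n: "0 < n" and t1: "t1 < n" and t2: "t2 < n" and m1: "0 < m1" "m1 \<le> l + 1"
    and m2: "0 < m2" "m2 \<le> l + 1"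
    and h: "is_hom n h (uniserial n t1 m1) (uniserial n t2 m2)"
  shows "factors_proj n l h (uniserial n t1 m1) (uniserial n t2 m2) \<longleftrightarrow>
    (\<forall>q < uniserial_dim n t2 m2 t1. (h t1 *\<^sub>v unit_vec (uniserial_dim n t1 m1 t1) 0) $ q \<noteq>
        (0::'k::field)
       \<longrightarrow> l + 1 \<le> offset n t2 t1 + n*q + m1)"
    (is "factors_proj n l h ?U1 ?U2 \<longleftrightarrow> (\<forall>q < _. ?y $ q \<noteq> 0 \<longrightarrow> _)")
proof -
  let ?UP = "uniserial n t2 (l+1) :: 'k qrep"
    and ?e = "unit_vec (uniserial_dim n t1 m1 t1) 0 :: 'k vec"
  have R1: "is_rep n l ?U1" and R2: "is_rep n l ?U2" and RP: "is_rep n l ?UP"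
    using is_rep_uniserial[OF n] m1 m2 by auto
  obtain p where p: "is_epi n p ?UP ?U2"
    and coord: "\<And>j w a. j < n \<Longrightarrow> w \<in> carrier_vec (uniserial_dim n t2 (l+1) j) \<Longrightarrow>
      a < uniserial_dim n t2 m2 j \<Longrightarrow> (p j *\<^sub>v w) $ a = w $ a"
    using uniserial_truncation[OF n t2 m2] by blast
  have p': "is_hom n p ?UP ?U2" using p unfolding is_epi_def by simp
  have lift: "factors_proj n l h ?U1 ?U2 \<longleftrightarrow> (\<exists>g. is_hom n g ?U1 ?UP \<and> (\<forall>i<n. h i = p i * g i))"
    using factors_proj_iff_lift[OF projective_uniserial[OF n t2] R1 R2 p] .
  show ?thesis
  proof
    assume "factors_proj n l h ?U1 ?U2"
    then obtain g where g: "is_hom n g ?U1 ?UP" "\<forall>i<n. h i = p i * g i" using lift by blast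
    let ?z = "g t1 *\<^sub>v ?e"
    have z: "?z \<in> carrier_vec (uniserial_dim n t2 (l+1) t1)" using is_hom_carrier[OF g(1) t1]
      by simp
    have yz: "?y = p t1 *\<^sub>v ?z"
      using g(2) t1 is_hom_carrier[OF g(1) t1] is_hom_carrier[OF p' t1] by simp
    have short: "\<forall>q < uniserial_dim n t2 (l+1) t1. offset n t2 t1 + n*q + m1 < l + 1 \<longrightarrow> ?z $ q = 0"
      using uniserial_hom_top_killed[OF n t1 m1 RP g(1)] pathmap_uniserial_mult_vec_eq_zero_iff[OF n
          t1 z]
      by simp
    show "\<forall>q < uniserial_dim n t2 m2 t1. ?y $ q \<noteq> 0 \<longrightarrow> l + 1 \<le> offset n t2 t1 + n*q + m1"
    proof (intro allI impI)
      fix q assume q: "q < uniserial_dim n t2 m2 t1" and ne: "?y $ q \<noteq> 0"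
      have "?y $ q = ?z $ q" using yz coord[OF t1 z q] by simp
      then show "l + 1 \<le> offset n t2 t1 + n*q + m1"
        using short uniserial_dim_mono[OF n m2(2) q] ne by (auto simp: not_le[symmetric])
    qed
  next
    assume cond: "\<forall>q < uniserial_dim n t2 m2 t1. ?y $ q \<noteq> 0 \<longrightarrow> l + 1 \<le> offset n t2 t1 + n*q + m1"
    define z where "z = vec (uniserial_dim n t2 (l+1) t1)
        (\<lambda>c. if c < uniserial_dim n t2 m2 t1 then ?y $ c else 0)"
    have z: "z \<in> carrier_vec (uniserial_dim n t2 (l+1) t1)" unfolding z_def by simp
    have pz: "pathmap n ?UP t1 m1 *\<^sub>v z = 0\<^sub>v (dims ?UP ((t1 + m1) mod n))"
      using pathmap_uniserial_mult_vec_eq_zero_iff[OF n t1 z] cond by (auto simp: z_def not_le)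
    obtain g where g: "is_hom n g ?U1 ?UP" "g t1 *\<^sub>v ?e = z"
      using uniserial_hom_exists[OF n t1 m1(1) RP _ pz] z by auto
    have "(p t1 * g t1) *\<^sub>v ?e = p t1 *\<^sub>v z"
      using g(2) is_hom_carrier[OF g(1) t1] is_hom_carrier[OF p' t1] by simp
    also have "\<dots> = ?y"
    proof (rule eq_vecI)
      show "dim_vec (p t1 *\<^sub>v z) = dim_vec ?y" using is_hom_carrier[OF p' t1] is_hom_carrier[OF h t1]
        by simp
      fix a assume "a < dim_vec ?y"
      then have a: "a < uniserial_dim n t2 m2 t1" using is_hom_carrier[OF h t1] by simp
      show "(p t1 *\<^sub>v z) $ a = ?y $ a"
        using coord[OF t1 z a] a uniserial_dim_mono[OF n m2(2) a] unfolding z_def by simp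
    qed
    finally have "(p t1 * g t1) *\<^sub>v ?e = ?y" .
    then have "\<forall>i<n. h i = p i * g i"
      using uniserial_hom_eqI[OF n t1 m1(1) R2 is_hom_comp[OF R1 RP R2 g(1) p'] h] by simp
    then show "factors_proj n l h ?U1 ?U2" using lift g(1) by blast
  qed
qed

lemma stable_hom_zero_uniserial_iff:
  assumes n: "0 < n" and t1: "t1 < n" and t2: "t2 < n" and m: "0 < m" "m \<le> l + 1"
  shows "stable_hom_zero n l (uniserial n t1 m :: 'k::field qrep) (uniserial n t2 m) \<longleftrightarrow>
    m \<le> offset n t2 t1 \<or> l + 1 \<le> offset n t2 t1 + m"
proof
  assume zero: "stable_hom_zero n l (uniserial n t1 m :: 'k qrep) (uniserial n t2 m)"
  show "m \<le> offset n t2 t1 \<or> l + 1 \<le> offset n t2 t1 + m"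
  proof (rule ccontr)
    assume "\<not> (m \<le> offset n t2 t1 \<or> l + 1 \<le> offset n t2 t1 + m)"
    then have short: "offset n t2 t1 < m" "offset n t2 t1 + m < l + 1" by auto
    then have pos: "0 < uniserial_dim n t2 m t1" using uniserial_dim_less_iff[OF n, of 0 t2 m t1]
      by simp
    let ?y = "unit_vec (uniserial_dim n t2 m t1) 0 :: 'k vec"
    have py: "pathmap n (uniserial n t2 m) t1 m *\<^sub>v ?y = 0\<^sub>v
        (dims (uniserial n t2 m) ((t1 + m) mod n))"
      using pathmap_uniserial_unit_vec[where 'k='k, OF n t1 pos, of m] by simp
    obtain h where h: "is_hom n h (uniserial n t1 m) (uniserial n t2 m)"
      "h t1 *\<^sub>v unit_vec (uniserial_dim n t1 m t1) 0 = ?y"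
      using uniserial_hom_exists[OF n t1 m(1) is_rep_uniserial[OF n m(2), of t2] _ py] by auto
    then have "factors_proj n l h (uniserial n t1 m) (uniserial n t2 m)"
      using zero unfolding stable_hom_zero_def by blast
    then show False using factors_proj_uniserial_iff[OF n t1 t2 m m h(1)] h(2) pos short by auto
  qed
next
  assume cond: "m \<le> offset n t2 t1 \<or> l + 1 \<le> offset n t2 t1 + m"
  show "stable_hom_zero n l (uniserial n t1 m :: 'k qrep) (uniserial n t2 m)"
    unfolding stable_hom_zero_def
  proof (intro allI impI)
    fix h assume h: "is_hom n h (uniserial n t1 m :: 'k qrep) (uniserial n t2 m)"
    have "l + 1 \<le> offset n t2 t1 + n*q + m" if "q < uniserial_dim n t2 m t1" for q
      using that cond uniserial_dim_less_iff[OF n, of q t2 m t1] by linarith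
    then show "factors_proj n l h (uniserial n t1 m) (uniserial n t2 m)"
      using factors_proj_uniserial_iff[OF n t1 t2 m m h] by blast
  qed
qed

lemma factors_proj_uniserial_endo_iff:
  assumes n: "0 < n" and t: "t < n" and m: "0 < m" "m \<le> l + 1"
    and h: "is_hom n h (uniserial n t m) (uniserial n t m)"
  shows "factors_proj n l h (uniserial n t m) (uniserial n t m) \<longleftrightarrow>
    (\<forall>q < uniserial_dim n t m t. (h t *\<^sub>v unit_vec (uniserial_dim n t m t) 0) $ q \<noteq> (0::'k::field)
       \<longrightarrow> l + 1 \<le> n*q + m)"
  using factors_proj_uniserial_iff[OF n t t m m h] by simp

lemma index_diff_smult_hom_top:
  assumes t: "t < n" and g: "is_hom n g (uniserial n t m) (uniserial n t m)"
    and f: "is_hom n f (uniserial n t m) (uniserial n t m)" and q: "q < uniserial_dim n t m t"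
  shows "((g t - c \<cdot>\<^sub>m f t) *\<^sub>v unit_vec (uniserial_dim n t m t) 0) $ q
    = (g t *\<^sub>v unit_vec (uniserial_dim n t m t) 0) $ q - c *
        (f t *\<^sub>v unit_vec (uniserial_dim n t m t) 0) $ q"
  using index_minus_smult_mult_mat_vec[where A="g t" and B="f t"
    and v="unit_vec (uniserial_dim n t m t) 0"]
    is_hom_carrier[OF g t] is_hom_carrier[OF f t] q by simp

text \<open>Modulo projectives an endomorphism of uniserial n t m is determined by the coordinates of
  the image of the top vector at the positions n * q < m with n * q + m \<le> l. Position 0
  always qualifies; if position n does too, the stable endomorphism ring has dimension at
  least 2.\<close>
lemma not_stable_brick_uniserial:
  assumes n: "0 < n" and t: "t < n" and m: "0 < m" "m \<le> l" and nm: "n < m" "m + n < l + 1"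
  shows "\<not> stable_brick n l (uniserial n t m :: 'k::field qrep)"
proof
  let ?U = "uniserial n t m :: 'k qrep" and ?d = "uniserial_dim n t m t"
  let ?e0 = "unit_vec ?d 0 :: 'k vec" and ?e1 = "unit_vec ?d 1 :: 'k vec"
  assume "stable_brick n l ?U"
  then obtain f where f: "is_hom n f ?U ?U"
    and span: "\<And>g. is_hom n g ?U ?U \<Longrightarrow> \<exists>c. factors_proj n l (\<lambda>i. g i - c \<cdot>\<^sub>m f i) ?U ?U"
    unfolding stable_brick_def by blast
  have m': "0 < m" "m \<le> l + 1" using m by auto
  have U: "is_rep n l ?U" using is_rep_uniserial[OF n m'(2)] .
  have d1: "1 < ?d" using uniserial_dim_less_iff[OF n, of 1 t m t] nm by simp
  have idU: "is_hom n (\<lambda>i. 1\<^sub>m (uniserial_dim n t m i)) ?U ?U" using is_hom_id[OF U] by simp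
  have vanish: "(g t *\<^sub>v ?e0) $ q = c * (f t *\<^sub>v ?e0) $ q"
    if g: "is_hom n g ?U ?U" and fp: "factors_proj n l (\<lambda>i. g i - c \<cdot>\<^sub>m f i) ?U ?U" and q: "q \<le> 1"
    for g c q
  proof -
    have q': "q < ?d" "n*q + m < l + 1" using q d1 nm m(2) by (auto simp: le_Suc_eq)
    have "\<forall>q < ?d. ((g t - c \<cdot>\<^sub>m f t) *\<^sub>v ?e0) $ q \<noteq> 0 \<longrightarrow> l + 1 \<le> n*q + m"
      using factors_proj_uniserial_endo_iff[OF n t m' is_hom_diff_smult[OF U U g f]] fp by blast
    then have "((g t - c \<cdot>\<^sub>m f t) *\<^sub>v ?e0) $ q = 0" using q' by (meson not_le)
    then show ?thesis using index_diff_smult_hom_top[OF t g f q'(1)] by simp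
  qed
  have py: "pathmap n ?U t m *\<^sub>v ?e1 = 0\<^sub>v (dims ?U ((t + m) mod n))"
    using pathmap_uniserial_unit_vec[where 'k='k, OF n t d1, of m] by simp
  obtain g where g: "is_hom n g ?U ?U" "g t *\<^sub>v ?e0 = ?e1"
    using uniserial_hom_exists[OF n t m(1) U _ py] by auto
  obtain c1 where c1: "factors_proj n l (\<lambda>i. 1\<^sub>m (uniserial_dim n t m i) - c1 \<cdot>\<^sub>m f i) ?U ?U"
    using span[OF idU] by blast
  obtain c2 where c2: "factors_proj n l (\<lambda>i. g i - c2 \<cdot>\<^sub>m f i) ?U ?U" using span[OF g(1)] by blast
  have k1: "1 = c1 * (f t *\<^sub>v ?e0) $ 0" "0 = c1 * (f t *\<^sub>v ?e0) $ 1"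
    using vanish[OF idU c1, of 0] vanish[OF idU c1, of 1] d1 by simp_all
  have k2: "1 = c2 * (f t *\<^sub>v ?e0) $ 1" using vanish[OF g(1) c2, of 1] g(2) d1 by simp
  have "c1 \<noteq> 0" using k1(1) by auto
  then have "(f t *\<^sub>v ?e0) $ 1 = 0" using k1(2) by simp
  then show False using k2 by simp
qed

lemma stable_brick_uniserial:
  assumes n: "0 < n" and t: "t < n" and m: "0 < m" "m \<le> l" and cond: "m \<le> n \<or> l + 1 \<le> m + n"
    and ind: "indecomposable n l (uniserial n t m :: 'k::field qrep)"
  shows "stable_brick n l (uniserial n t m :: 'k qrep)"
proof -
  let ?U = "uniserial n t m :: 'k qrep" and ?d = "uniserial_dim n t m t"
  let ?e0 = "unit_vec ?d 0 :: 'k vec"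
  have m': "0 < m" "m \<le> l + 1" using m by auto
  have U: "is_rep n l ?U" using is_rep_uniserial[OF n m'(2)] .
  have d0: "0 < ?d" using uniserial_dim_top_pos[OF n m(1)] .
  have idU: "is_hom n (\<lambda>i. 1\<^sub>m (uniserial_dim n t m i)) ?U ?U" using is_hom_id[OF U] by simp
  have "\<not> factors_proj n l (\<lambda>i. 1\<^sub>m (uniserial_dim n t m i)) ?U ?U"
    using factors_proj_uniserial_endo_iff[OF n t m' idU] d0 m(2) by auto
  moreover have "\<exists>c. factors_proj n l (\<lambda>i. g i - c \<cdot>\<^sub>m 1\<^sub>m (uniserial_dim n t m i)) ?U ?U"
    if g: "is_hom n g ?U ?U" for g
  proof (intro exI)
    let ?c = "(g t *\<^sub>v ?e0) $ 0"
    have "l + 1 \<le> n*q + m"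
      if q: "q < ?d" and ne: "((g t - ?c \<cdot>\<^sub>m 1\<^sub>m (uniserial_dim n t m t)) *\<^sub>v ?e0) $ q \<noteq> 0" for q
    proof -
      have "q \<noteq> 0"
      proof
        assume "q = 0"
        then have "((g t - ?c \<cdot>\<^sub>m 1\<^sub>m (uniserial_dim n t m t)) *\<^sub>v ?e0) $ q = 0"
          using index_diff_smult_hom_top[OF t g idU q] d0 by simp
        then show False using ne by simp
      qed
      then have "n \<le> n*q" by simp
      moreover have "n*q < m" using q uniserial_dim_less_iff[OF n, of q t m t] by simp
      ultimately show ?thesis using cond m(2) by linarith
    qed
    then show "factors_proj n l (\<lambda>i. g i - ?c \<cdot>\<^sub>m 1\<^sub>m (uniserial_dim n t m i)) ?U ?U"
      using factors_proj_uniserial_endo_iff[OF n t m' is_hom_diff_smult[OF U U g idU]] by blast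
  qed
  ultimately show ?thesis unfolding stable_brick_def using ind idU by blast
qed

lemma stable_brick_uniserial_iff:
  assumes n: "0 < n" and t: "t < n" and m: "0 < m" "m \<le> l"
    and ind: "indecomposable n l (uniserial n t m :: 'k::field qrep)"
  shows "stable_brick n l (uniserial n t m :: 'k qrep) \<longleftrightarrow> m \<le> n \<or> l + 1 \<le> m + n"
  using stable_brick_uniserial[OF n t m _ ind] not_stable_brick_uniserial[OF n t m] by fastforce

section \<open>Indecomposable modules are uniserial\<close>

lemma exists_longest_nonzero_path:
  assumes R: "is_rep n l M" and nz: "\<not> is_zero_rep n M"
  obtains d t where "d \<le> l" "t < n" "pathmap n M t d \<noteq> 0\<^sub>m (dims M ((t+d) mod n)) (dims M t)"
    "\<forall>i<n. pathmap n M i (Suc d) = 0\<^sub>m (dims M ((i + Suc d) mod n)) (dims M i)"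
proof -
  define S where "S = {s. s \<le> l \<and> (\<exists>i<n. pathmap n M i s \<noteq> 0\<^sub>m (dims M ((i+s) mod n)) (dims M i))}"
  obtain i0 where i0: "i0 < n" "dims M i0 \<noteq> 0" using nz unfolding is_zero_rep_def by blast
  have "pathmap n M i0 0 \<noteq> 0\<^sub>m (dims M ((i0+0) mod n)) (dims M i0)"
  proof
    assume "pathmap n M i0 0 = 0\<^sub>m (dims M ((i0+0) mod n)) (dims M i0)"
    then have "(1\<^sub>m (dims M i0) :: 'a mat) $$ (0,0) = (0\<^sub>m (dims M i0) (dims M i0) :: 'a mat) $$
        (0,0)"
      using i0 by simp
    then show False using i0 by simp
  qed
  then have "0 \<in> S" unfolding S_def using i0 by blast
  moreover have fin: "finite S" unfolding S_def by (rule finite_subset[of _ "{..l}"]) auto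
  ultimately have d: "Max S \<in> S" using Max_in by blast
  have "\<forall>i<n. pathmap n M i (Suc (Max S)) = 0\<^sub>m (dims M ((i + Suc (Max S)) mod n)) (dims M i)"
  proof (cases "Suc (Max S) \<le> l")
    case True
    have "Suc (Max S) \<notin> S" using Max_ge[OF fin] by fastforce
    then show ?thesis using True unfolding S_def by blast
  next
    case False
    then have "Max S = l" using d unfolding S_def by simp
    then show ?thesis using R unfolding is_rep_def by simp
  qed
  then show ?thesis using d that unfolding S_def by blast
qed

lemma exists_dual_pair:
  assumes R: "is_rep n l M" and t: "t < n" and nz: "A \<noteq> 0\<^sub>m (dims M s) (dims M t)"
    and A: "A \<in> carrier_mat (dims M s) (dims M t)"
  obtains x phi where "x \<in> carrier_vec (dims M t)" "phi \<in> carrier_vec (dims M s)" "phi \<bullet> (A *\<^sub>v x) =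
      (1::'a::field)"
proof -
  have "\<exists>b < dims M t. A *\<^sub>v unit_vec (dims M t) b \<noteq> 0\<^sub>v (dims M s)"
  proof (rule ccontr)
    assume "\<not> (\<exists>b < dims M t. A *\<^sub>v unit_vec (dims M t) b \<noteq> 0\<^sub>v (dims M s))"
    then have "A = 0\<^sub>m (dims M s) (dims M t)"
      by (intro mat_eq_unit_vecI[OF A zero_carrier_mat]) (simp add: zero_mult_mat_vec)
    then show False using nz by simp
  qed
  then obtain b where b: "b < dims M t" "A *\<^sub>v unit_vec (dims M t) b \<noteq> 0\<^sub>v (dims M s)" by blast
  let ?w = "A *\<^sub>v unit_vec (dims M t) b"
  have "\<exists>c < dims M s. ?w $ c \<noteq> 0"
  proof (rule ccontr)
    assume "\<not> (\<exists>c < dims M s. ?w $ c \<noteq> 0)"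
    then have "?w = 0\<^sub>v (dims M s)" using A by (intro eq_vecI) auto
    then show False using b(2) by simp
  qed
  then obtain c where c: "c < dims M s" "?w $ c \<noteq> 0" by blast
  have "((1 / ?w $ c) \<cdot>\<^sub>v unit_vec (dims M s) c) \<bullet> ?w = 1"
    using c A by (simp add: scalar_prod_left_unit)
  then show ?thesis by (rule that[rotated 2]) simp_all
qed

lemma pathmap_mult_vec_lincomb:
  assumes R: "is_rep n l M" and t: "t < n" and x: "x \<in> carrier_vec (dims M t)"
    and S: "finite S" and loop: "\<And>j. j \<in> S \<Longrightarrow> (t + k j) mod n = t"
  shows "pathmap n M t s *\<^sub>v vec (dims M t) (\<lambda>c. \<Sum>j\<in>S. a j * (pathmap n M t (k j) *\<^sub>v x) $ c)
    = vec (dims M ((t+s) mod n)) (\<lambda>i. \<Sum>j\<in>S. a j * (pathmap n M t (k j + s) *\<^sub>v x) $ i)"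
proof -
  have Pk: "pathmap n M t (k j) \<in> carrier_mat (dims M t) (dims M t)" if j: "j \<in> S" for j
    using pathmap_carrier[OF R t, of "k j"] loop[OF j] by simp
  have "pathmap n M t s *\<^sub>v (pathmap n M t (k j) *\<^sub>v x) = pathmap n M t (k j + s) *\<^sub>v x" if j: "j \<in> S"
    for j
  proof -
    have "pathmap n M t s * pathmap n M t (k j) = pathmap n M t (k j + s)"
      using pathmap_add[OF R t, of "k j" s] loop[OF j] by simp
    then show ?thesis
      using assoc_mult_mat_vec[OF pathmap_carrier[OF R t, of s] Pk[OF j] x] by simp
  qed
  moreover have "pathmap n M t (k j) *\<^sub>v x \<in> carrier_vec (dims M t)" if "j \<in> S" for j
    using Pk[OF that] x by simp
  ultimately show ?thesis
    using mult_mat_vec_sum[OF pathmap_carrier[OF R t, of s] S, of "\<lambda>j. pathmap n M t (k j) *\<^sub>v x" a]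
    by (simp cong: sum.cong)
qed

text \<open>Correcting x by the inverse of the power series \<Sum> B q X^q makes the functional phi
  vanish on all images of x along paths of length d - q n with q > 0.\<close>
lemma exists_normalized_top:
  assumes n: "0 < n" and R: "is_rep n l M" and t: "t < n"
    and zero: "\<forall>i<n. pathmap n M i (Suc d) = 0\<^sub>m (dims M ((i + Suc d) mod n)) (dims M i)"
    and nz: "pathmap n M t d \<noteq> 0\<^sub>m (dims M ((t+d) mod n)) (dims M t)"
  obtains x phi where "x \<in> carrier_vec (dims M t)" "phi \<in> carrier_vec (dims M ((t+d) mod n))"
    "\<And>q. q*n \<le> d \<Longrightarrow> phi \<bullet> (pathmap n M t (d - q*n) *\<^sub>v x) = (if q = 0 then 1 else (0::'a::field))"
proof -
  let ?T = "(t + d) mod n"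
  have PC: "pathmap n M t s \<in> carrier_mat (dims M ((t+s) mod n)) (dims M t)" for s
    using pathmap_carrier[OF R t] .
  obtain x0 phi where x0: "x0 \<in> carrier_vec (dims M t)" and phi: "phi \<in> carrier_vec (dims M ?T)"
    and top: "phi \<bullet> (pathmap n M t d *\<^sub>v x0) = 1"
    using exists_dual_pair[OF R t nz PC] .
  have killed: "pathmap n M t s *\<^sub>v x0 = 0\<^sub>v (dims M ((t + s) mod n))" if "Suc d \<le> s" for s
    using pathmap_zero_mono[OF R zero t that] zero_mult_mat_vec[OF x0] by simp
  define B where "B = Abs_fps (\<lambda>q. phi \<bullet> (pathmap n M t (d - q*n) *\<^sub>v x0))"
  define a where "a = inverse B"
  have "fps_nth B 0 \<noteq> 0" using top by (simp add: B_def)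
  then have "a * B = 1" unfolding a_def by (rule inverse_mult_eq_1)
  then have "fps_nth (a * B) q = (if q = 0 then 1 else 0)" for q by simp
  then have conv: "(\<Sum>j=0..q. fps_nth a j * fps_nth B (q - j)) = (if q = 0 then 1 else 0)" for q
    by (simp add: fps_mult_nth)
  define x where "x = vec (dims M t)
      (\<lambda>c. \<Sum>j\<in>{..d div n}. fps_nth a j * (pathmap n M t (j*n) *\<^sub>v x0) $ c)"
  have loop: "(t + j*n) mod n = t" for j using t by simp
  have "phi \<bullet> (pathmap n M t (d - q*n) *\<^sub>v x) = (if q = 0 then 1 else 0)" if q: "q*n \<le> d" for q
  proof -
    define r where "r = d - q*n"
    have r: "r + q*n = d" unfolding r_def using q by simp
    have vT: "(t + (j*n + r)) mod n = ?T" for j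
    proof -
      have "t + (j*n + r) = (t + r) + j*n" "t + d = (t + r) + q*n" using r by simp_all
      then show ?thesis by (simp only: mod_mult_self1)
    qed
    have cs: "pathmap n M t (j*n + r) *\<^sub>v x0 \<in> carrier_vec (dims M ?T)" for j
      using PC[of "j*n + r"] x0 vT[of j] by simp
    have "pathmap n M t r *\<^sub>v x = vec (dims M ((t+r) mod n))
        (\<lambda>i. \<Sum>j\<in>{..d div n}. fps_nth a j * (pathmap n M t (j*n + r) *\<^sub>v x0) $ i)"
      unfolding x_def by (rule pathmap_mult_vec_lincomb[OF R t x0 finite_atMost loop])
    moreover have "(t + r) mod n = ?T" using vT[of 0] by simp
    ultimately have "phi \<bullet> (pathmap n M t r *\<^sub>v x) =
        (\<Sum>j\<in>{..d div n}. fps_nth a j * (phi \<bullet> (pathmap n M t (j*n + r) *\<^sub>v x0)))"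
      using scalar_prod_vec_sum[OF phi cs] by simp
    also have "\<dots> = (\<Sum>j=0..q. fps_nth a j * fps_nth B (q - j))"
    proof (rule sum.mono_neutral_cong_right)
      show "{0..q} \<subseteq> {..d div n}"
      proof
        fix j assume "j \<in> {0..q}"
        then have "j*n \<le> q*n" by simp
        then have "j*n \<le> d" using q by (rule le_trans)
        then show "j \<in> {..d div n}" using n by (simp add: less_eq_div_iff_mult_less_eq)
      qed
      show "\<forall>j\<in>{..d div n} - {0..q}. fps_nth a j * (phi \<bullet> (pathmap n M t (j*n + r) *\<^sub>v x0)) = 0"
      proof
        fix j assume "j \<in> {..d div n} - {0..q}"
        then have "q*n + n \<le> j*n" using mult_le_mono1[of "Suc q" j n] by simp
        then have "Suc d \<le> j*n + r" using r n by linarith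
        then show "fps_nth a j * (phi \<bullet> (pathmap n M t (j*n + r) *\<^sub>v x0)) = 0"
          using killed phi vT by simp
      qed
      show "fps_nth a j * (phi \<bullet> (pathmap n M t (j*n + r) *\<^sub>v x0)) = fps_nth a j * fps_nth B (q - j)"
        if "j \<in> {0..q}" for j
      proof -
        from that have "(q - j)*n = q*n - j*n" "j*n \<le> q*n" using mult_le_mono1[of j q n]
          by (simp_all add: diff_mult_distrib)
        then have "j*n + r = d - (q - j)*n" using r by linarith
        then show "fps_nth a j * (phi \<bullet> (pathmap n M t (j*n + r) *\<^sub>v x0)) = fps_nth a j * fps_nth B
            (q - j)"
          by (simp add: B_def)
      qed
    qed simp
    finally show ?thesis using conv unfolding r_def by simp
  qed
  moreover have "x \<in> carrier_vec (dims M t)" unfolding x_def by simp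
  ultimately show ?thesis using that phi by blast
qed

text \<open>The a-th coordinate of v at vertex j is phi applied to the image of v under the path
  carrying position offset n t j + n * a to position d.\<close>
definition coord_map :: "nat \<Rightarrow> nat \<Rightarrow> nat \<Rightarrow> 'k::field qrep \<Rightarrow> 'k vec \<Rightarrow> nat \<Rightarrow> 'k mat" where
  "coord_map n t d M phi j = mat (uniserial_dim n t (Suc d) j) (dims M j)
     (\<lambda>(a,c). phi \<bullet> col (pathmap n M j (d - (offset n t j + n*a))) c)"

lemma coord_map_carrier: "coord_map n t d M phi j \<in> carrier_mat (uniserial_dim n t (Suc d) j)
    (dims M j)"
  unfolding coord_map_def by simp

lemma coord_map_dims [simp]:
  "dim_row (coord_map n t d M phi j) = uniserial_dim n t (Suc d) j" "dim_col
      (coord_map n t d M phi j) = dims M j"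
  unfolding coord_map_def by simp_all

lemma coord_map_mult_vec_index:
  assumes n: "0 < n" and R: "is_rep n l M" and j: "j < n"
    and phi: "phi \<in> carrier_vec (dims M ((t+d) mod n))"
    and v: "v \<in> carrier_vec (dims M j)" and a: "a < uniserial_dim n t (Suc d) j"
  shows "(coord_map n t d M phi j *\<^sub>v v) $ a = phi \<bullet> (pathmap n M j (d - (offset n t j + n*a)) *\<^sub>v v)"
proof -
  let ?P = "pathmap n M j (d - (offset n t j + n*a))"
  have kd: "offset n t j + n*a \<le> d" using a uniserial_dim_less_iff[OF n, of a t "Suc d" j] by simp
  have "(j + (d - (offset n t j + n*a))) mod n =
      ((t + (offset n t j + n*a)) mod n + (d - (offset n t j + n*a))) mod n"
    using vertex_offset[OF n, of t j a] j by simp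
  also have "\<dots> = ((t + (offset n t j + n*a)) + (d - (offset n t j + n*a))) mod n"
    by (simp add: mod_add_left_eq)
  also have "(t + (offset n t j + n*a)) + (d - (offset n t j + n*a)) = t + d" using kd by simp
  finally have "(j + (d - (offset n t j + n*a))) mod n = (t + d) mod n" .
  then have Pc: "?P \<in> carrier_mat (dims M ((t+d) mod n)) (dims M j)"
    using pathmap_carrier[OF R j, of "d - (offset n t j + n*a)"] by simp
  have "(coord_map n t d M phi j *\<^sub>v v) $ a = row (coord_map n t d M phi j) a \<bullet> v"
    using coord_map_carrier a by simp
  also have "row (coord_map n t d M phi j) a = vec (dims M j) (\<lambda>c. phi \<bullet> col ?P c)"
    unfolding coord_map_def using a by (intro eq_vecI) auto
  also have "vec (dims M j) (\<lambda>c. phi \<bullet> col ?P c) \<bullet> v = phi \<bullet> vec (dims M ((t+d) mod n))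
      (\<lambda>i. row ?P i \<bullet> v)"
    using assoc_scalar_prod[OF phi Pc v] .
  also have "vec (dims M ((t+d) mod n)) (\<lambda>i. row ?P i \<bullet> v) = ?P *\<^sub>v v" using Pc
    unfolding mult_mat_vec_def by simp
  finally show ?thesis .
qed

lemma is_hom_coord_map:
  assumes n: "0 < n" and R: "is_rep n l M" and t: "t < n"
    and zero: "\<forall>i<n. pathmap n M i (Suc d) = 0\<^sub>m (dims M ((i + Suc d) mod n)) (dims M i)"
    and phi: "phi \<in> carrier_vec (dims M ((t+d) mod n))"
  shows "is_hom n (coord_map n t d M phi) M (uniserial n t (Suc d))"
  unfolding is_hom_def
proof (intro conjI allI impI)
  fix j assume j: "j < n"
  let ?r = "coord_map n t d M phi"
  show "?r j \<in> carrier_mat (dims (uniserial n t (Suc d)) j) (dims M j)" using coord_map_carrier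
    by simp
  have nj: "nxt n j < n" using nxt_less[OF n] .
  have mj: "maps M j \<in> carrier_mat (dims M (nxt n j)) (dims M j)" using R j unfolding is_rep_def
    by simp
  show "?r (nxt n j) * maps M j = maps (uniserial n t (Suc d)) j * ?r j"
  proof (rule mat_eq_unit_vecI[of _ "uniserial_dim n t (Suc d) (nxt n j)" "dims M j"])
    show "?r (nxt n j) * maps M j \<in> carrier_mat (uniserial_dim n t (Suc d) (nxt n j)) (dims M j)"
      by (rule mult_carrier_mat[OF coord_map_carrier mj])
    show "maps (uniserial n t (Suc d)) j * ?r j \<in> carrier_mat (uniserial_dim n t (Suc d) (nxt n j))
        (dims M j)"
      using mult_carrier_mat[OF uniserial_map_carrier coord_map_carrier] by simp
    fix b assume b: "b < dims M j"
    let ?v = "unit_vec (dims M j) b"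
    have v: "?v \<in> carrier_vec (dims M j)" by simp
    show "(?r (nxt n j) * maps M j) *\<^sub>v ?v = (maps (uniserial n t (Suc d)) j * ?r j) *\<^sub>v ?v"
    proof (rule eq_vecI)
      fix a assume "a < dim_vec ((maps (uniserial n t (Suc d)) j * ?r j) *\<^sub>v ?v)"
      then have a: "a < uniserial_dim n t (Suc d) (nxt n j)" by simp
      let ?k = "offset n t (nxt n j) + n*a"
      have kd: "?k \<le> d" using a uniserial_dim_less_iff[OF n, of a t "Suc d" "nxt n j"] by simp
      have "((?r (nxt n j) * maps M j) *\<^sub>v ?v) $ a = phi \<bullet>
          (pathmap n M (nxt n j) (d - ?k) *\<^sub>v (maps M j *\<^sub>v ?v))"
        using coord_map_mult_vec_index[OF n R nj phi _ a] coord_map_carrier mj by simp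
      also have "pathmap n M (nxt n j) (d - ?k) *\<^sub>v (maps M j *\<^sub>v ?v) =
          (pathmap n M (nxt n j) (d - ?k) * maps M j) *\<^sub>v ?v"
        using pathmap_carrier[OF R nj, of "d - ?k"] mj by simp
      also have "pathmap n M (nxt n j) (d - ?k) * maps M j = pathmap n M j (Suc (d - ?k))"
        using pathmap_Suc_prepend[OF R j] unfolding nxt_def by simp
      finally have L: "((?r (nxt n j) * maps M j) *\<^sub>v ?v) $ a = phi \<bullet>
          (pathmap n M j (Suc (d - ?k)) *\<^sub>v ?v)" .
      have PU1: "pathmap n (uniserial n t (Suc d)) j 1 = uniserial_map n t (Suc d) j" using j
        by simp
      have "((maps (uniserial n t (Suc d)) j * ?r j) *\<^sub>v ?v) $ a
          = (pathmap n (uniserial n t (Suc d)) j 1 *\<^sub>v (?r j *\<^sub>v ?v)) $ a"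
        unfolding PU1 by simp
      also have "\<dots> = (if 1 \<le> ?k then (?r j *\<^sub>v ?v) $ ((?k - 1) div n) else 0)"
        unfolding nxt_def
        by (rule pathmap_uniserial_mult_vec_index[OF n j mult_mat_vec_carrier[OF coord_map_carrier
            unit_vec_carrier]])
          (use a in \<open>simp add: nxt_def\<close>)
      finally have Rt: "((maps (uniserial n t (Suc d)) j * ?r j) *\<^sub>v ?v) $ a
          = (if 1 \<le> ?k then (?r j *\<^sub>v ?v) $ ((?k - 1) div n) else 0)" .
      show "((?r (nxt n j) * maps M j) *\<^sub>v ?v) $ a = ((maps (uniserial n t (Suc d)) j * ?r j) *\<^sub>v ?v)
          $ a"
      proof (cases "1 \<le> ?k")
        case True
        have vk: "(t + ?k) mod n = (j + 1) mod n" using vertex_offset[OF n, of t "nxt n j" a]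
          unfolding nxt_def by simp
        have k1: "(t + (?k - 1)) + 1 = t + ?k" using True by simp
        have "((t + (?k - 1)) + 1) mod n = (j + 1) mod n" unfolding k1 by (rule vk)
        then have "(t + (?k - 1)) mod n = j mod n" by (rule mod_add_right_cancel)
        then have a0: "offset n t j + n * ((?k - 1) div n) = ?k - 1" using offset_decomp[OF n]
          by blast
        then have "(?k - 1) div n < uniserial_dim n t (Suc d) j"
          using uniserial_dim_less_iff[OF n] kd by simp
        then have "(?r j *\<^sub>v ?v) $ ((?k - 1) div n) = phi \<bullet> (pathmap n M j (d - (?k - 1)) *\<^sub>v ?v)"
          using coord_map_mult_vec_index[OF n R j phi v] a0 by simp
        moreover have "Suc (d - ?k) = d - (?k - 1)" using True kd by simp
        ultimately show ?thesis using L Rt True by simp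
      next
        case False
        then have "pathmap n M j (Suc (d - ?k)) *\<^sub>v ?v = 0\<^sub>v (dims M ((j + Suc (d - ?k)) mod n))"
          using pathmap_zero_mono[OF R zero j, of "Suc (d - ?k)"] zero_mult_mat_vec[OF v] by simp
        then show ?thesis using L Rt False phi by simp
      qed
    qed (use coord_map_carrier mj in simp)
  qed
qed

text \<open>With d the length of the longest nonzero path and x, phi normalized as above, x generates a
  copy of uniserial n t (Suc d) and the coordinate map splits it off.\<close>
lemma indecomposable_iso_uniserial:
  assumes n: "0 < n" and ind: "indecomposable n l (M :: 'k::field qrep)"
  obtains t m where "t < n" "0 < m" "m \<le> l + 1" "iso n M (uniserial n t m)"
proof -
  have R: "is_rep n l M" and nz: "\<not> is_zero_rep n M" using ind unfolding indecomposable_def by auto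
  obtain d t where d: "d \<le> l" and t: "t < n"
    and top: "pathmap n M t d \<noteq> 0\<^sub>m (dims M ((t+d) mod n)) (dims M t)"
    and zero: "\<forall>i<n. pathmap n M i (Suc d) = 0\<^sub>m (dims M ((i + Suc d) mod n)) (dims M i)"
    using exists_longest_nonzero_path[OF R nz] by blast
  obtain x phi where x: "x \<in> carrier_vec (dims M t)"
    and phi: "phi \<in> carrier_vec (dims M ((t+d) mod n))"
    and norm: "\<And>q. q*n \<le> d \<Longrightarrow> phi \<bullet> (pathmap n M t (d - q*n) *\<^sub>v x) = (if q = 0 then 1 else 0)"
    using exists_normalized_top[OF n R t zero top] by blast
  let ?U = "uniserial n t (Suc d) :: 'k qrep"
    and ?e = "unit_vec (uniserial_dim n t (Suc d) t) 0 :: 'k vec"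
  let ?r = "coord_map n t d M phi"
  have U: "is_rep n l ?U" using is_rep_uniserial[OF n, of "Suc d" l t] d by simp
  have py: "pathmap n M t (Suc d) *\<^sub>v x = 0\<^sub>v (dims M ((t + Suc d) mod n))"
    using zero t zero_mult_mat_vec[OF x] by simp
  obtain g where g: "is_hom n g ?U M" "g t *\<^sub>v ?e = x"
    using uniserial_hom_exists[OF n t zero_less_Suc R x py] by blast
  have r: "is_hom n ?r M ?U" using is_hom_coord_map[OF n R t zero phi] .
  have top: "(?r t * g t) *\<^sub>v ?e = 1\<^sub>m (uniserial_dim n t (Suc d) t) *\<^sub>v ?e"
  proof (rule eq_vecI)
    fix a assume "a < dim_vec (1\<^sub>m (uniserial_dim n t (Suc d) t) *\<^sub>v ?e)"
    then have a: "a < uniserial_dim n t (Suc d) t" by simp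
    then have "a*n \<le> d" using uniserial_dim_less_iff[OF n, of a t "Suc d" t]
      by (simp add: mult.commute)
    then show "((?r t * g t) *\<^sub>v ?e) $ a = (1\<^sub>m (uniserial_dim n t (Suc d) t) *\<^sub>v ?e) $ a"
      using coord_map_mult_vec_index[OF n R t phi x a] norm[of a] g(2) a coord_map_carrier
          is_hom_carrier[OF g(1) t]
      by (simp add: mult.commute)
  qed (use coord_map_carrier in simp)
  then have rg: "?r i * g i = 1\<^sub>m (uniserial_dim n t (Suc d) i)" if i: "i < n" for i
    using uniserial_hom_eqI[OF n t _ U is_hom_comp[OF U R U g(1) r] is_hom_id[OF U] _ i] top by simp
  define e where "e = (\<lambda>i. g i * ?r i)"
  have "is_hom n e M M" unfolding e_def using is_hom_comp[OF R U R r g(1)] .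
  moreover have "\<forall>i<n. e i * e i = e i"
  proof (intro allI impI)
    fix i assume i: "i < n"
    note c = coord_map_carrier[of n t d M phi i] is_hom_carrier[OF g(1) i]
    have "e i * e i = g i * (?r i * g i) * ?r i" unfolding e_def using c by simp
    then show "e i * e i = e i" unfolding e_def using rg[OF i] c by simp
  qed
  moreover have "e t \<noteq> 0\<^sub>m (dims M t) (dims M t)"
  proof
    assume "e t = 0\<^sub>m (dims M t) (dims M t)"
    moreover have "e t *\<^sub>v x = x"
    proof -
      have "e t *\<^sub>v x = g t *\<^sub>v ((?r t * g t) *\<^sub>v ?e)"
        using coord_map_carrier[of n t d M phi t] is_hom_carrier[OF g(1) t]
          unfolding e_def g(2)[symmetric]
        by simp
      then show ?thesis using rg[OF t] g(2) by simp
    qed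
    moreover have "x \<noteq> 0\<^sub>v (dims M t)"
    proof
      assume "x = 0\<^sub>v (dims M t)"
      then have "pathmap n M t d *\<^sub>v x = 0\<^sub>v (dims M ((t+d) mod n))"
        using mult_mat_vec_zero[OF pathmap_carrier[OF R t]] by simp
      then show False using norm[of 0] phi by simp
    qed
    ultimately show False using zero_mult_mat_vec[OF x] by simp
  qed
  ultimately have "\<forall>i<n. g i * ?r i = 1\<^sub>m (dims M i)"
    using ind t unfolding indecomposable_def e_def by blast
  then have iso: "iso n M ?U" unfolding iso_def using r g(1) rg by auto
  show ?thesis using that[OF t zero_less_Suc _ iso] d by simp
qed

section \<open>The Nakayama orbit\<close>

lemma shift_rep_dims[simp]: "dims (shift_rep n s M) i = dims M ((i+s) mod n)"
  and shift_rep_maps[simp]: "maps (shift_rep n s M) i = maps M ((i+s) mod n)"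
  unfolding shift_rep_def by simp_all

lemma nxt_mod_add: "nxt n ((i+s) mod n) = (nxt n i + s) mod n"
  unfolding nxt_def by (simp add: mod_simps ac_simps)

lemma pathmap_shift_rep:
  assumes n: "0 < n" and i: "i < n"
  shows "pathmap n (shift_rep n s M) i k = pathmap n M ((i+s) mod n) k"
proof (induction k)
  case 0
  then show ?case by simp
next
  case (Suc k)
  have "((i+k) mod n + s) mod n = ((i+s) mod n + k) mod n" by (simp add: mod_simps ac_simps)
  then show ?case using Suc by simp
qed

lemma is_rep_shift_rep:
  assumes n: "0 < n" and M: "is_rep n l M"
  shows "is_rep n l (shift_rep n s M)"
  unfolding is_rep_def
proof (intro conjI allI impI)
  fix i assume i: "i < n"
  have j: "(i+s) mod n < n" using n by simp
  show "maps (shift_rep n s M) i \<in> carrier_mat (dims (shift_rep n s M) (nxt n i))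
      (dims (shift_rep n s M) i)"
    using M j unfolding is_rep_def by (simp add: nxt_mod_add[symmetric])
  have e: "((i+s) mod n + Suc l) mod n = ((i + Suc l) mod n + s) mod n"
    by (simp only: mod_add_left_eq) (simp add: ac_simps)
  show "pathmap n (shift_rep n s M) i (Suc l) = 0\<^sub>m (dims (shift_rep n s M) ((i + Suc l) mod n))
      (dims (shift_rep n s M) i)"
  proof -
    have P: "pathmap n (shift_rep n s M) i (Suc l) = pathmap n M ((i+s) mod n) (Suc l)"
      by (rule pathmap_shift_rep[OF n i])
    have Z: "pathmap n M ((i+s) mod n) (Suc l) = 0\<^sub>m (dims M (((i+s) mod n + Suc l) mod n))
        (dims M ((i+s) mod n))"
      using M j unfolding is_rep_def by blast
    show ?thesis by (simp only: P Z shift_rep_dims e)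
  qed
qed

lemma is_hom_shift_rep:
  assumes n: "0 < n" and f: "is_hom n f A B"
  shows "is_hom n (\<lambda>i. f ((i+s) mod n)) (shift_rep n s A) (shift_rep n s B)"
  unfolding is_hom_def
proof (intro conjI allI impI)
  fix i assume i: "i < n"
  have j: "(i+s) mod n < n" using n by simp
  show "f ((i+s) mod n) \<in> carrier_mat (dims (shift_rep n s B) i) (dims (shift_rep n s A) i)"
    using is_hom_carrier[OF f j] by simp
  show "f ((nxt n i + s) mod n) * maps (shift_rep n s A) i = maps (shift_rep n s B) i * f
      ((i+s) mod n)"
    using f j unfolding is_hom_def by (simp add: nxt_mod_add[symmetric])
qed

lemma iso_shift_rep:
  assumes n: "0 < n" and iso: "iso n A B"
  shows "iso n (shift_rep n s A) (shift_rep n s B)"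
proof -
  obtain f g where fg: "is_hom n f A B" "is_hom n g B A"
    "\<forall>i<n. g i * f i = 1\<^sub>m (dims A i) \<and> f i * g i = 1\<^sub>m (dims B i)"
    using iso unfolding iso_def by blast
  have "\<forall>i<n. g ((i+s) mod n) * f ((i+s) mod n) = 1\<^sub>m (dims (shift_rep n s A) i) \<and>
              f ((i+s) mod n) * g ((i+s) mod n) = 1\<^sub>m (dims (shift_rep n s B) i)"
    using fg(3) n by simp
  then show ?thesis unfolding iso_def
    using is_hom_shift_rep[OF n fg(1)] is_hom_shift_rep[OF n fg(2)] by blast
qed

lemma mod_add_mod_add_eq:
  fixes n i s s' :: nat
  assumes n: "0 < n" and i: "i < n" and ss: "(s + s') mod n = 0"
  shows "((i + s') mod n + s) mod n = i"
proof -
  obtain k where k: "s + s' = n * k" using ss by (auto simp: mod_eq_0_iff_dvd dvd_def)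
  have "((i + s') mod n + s) mod n = ((i + s') + s) mod n" by (simp add: mod_simps)
  also have "(i + s') + s = i + n * k" using k by simp
  also have "(i + n * k) mod n = i" using i by simp
  finally show ?thesis .
qed

lemma is_hom_shift_rep_back:
  assumes n: "0 < n" and f: "is_hom n f (shift_rep n s A) (shift_rep n s B)"
    and ss: "(s + s') mod n = 0"
  shows "is_hom n (\<lambda>i. f ((i+s') mod n)) A B"
  unfolding is_hom_def
proof (intro conjI allI impI)
  fix i assume i: "i < n"
  have j: "(i+s') mod n < n" using n by simp
  have b: "((i + s') mod n + s) mod n = i" using mod_add_mod_add_eq[OF n i ss] .
  show "f ((i+s') mod n) \<in> carrier_mat (dims B i) (dims A i)"
    using is_hom_carrier[OF f j] b by simp
  have "f (nxt n ((i+s') mod n)) * maps (shift_rep n s A) ((i+s') mod n) = maps (shift_rep n s B)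
      ((i+s') mod n) * f ((i+s') mod n)"
    using f j unfolding is_hom_def by simp
  then show "f ((nxt n i + s') mod n) * maps A i = maps B i * f ((i+s') mod n)"
    using b by (simp add: nxt_mod_add)
qed

lemma indecomposable_shift_rep:
  assumes n: "0 < n" and M: "indecomposable n l M"
  shows "indecomposable n l (shift_rep n s M)"
proof -
  have R: "is_rep n l M" using M unfolding indecomposable_def by simp
  define s' where "s' = n - s mod n"
  have ss: "(s + s') mod n = 0"
  proof -
    have e1: "s div n * n + s mod n = s" by (rule div_mult_mod_eq)
    have "s + s' = s div n * n + n" unfolding s'_def using e1 mod_less_divisor[OF n, of s]
      by linarith
    then show ?thesis by simp
  qed
  obtain i0 where i0: "i0 < n" "dims M i0 \<noteq> 0" using M unfolding indecomposable_def is_zero_rep_def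
    by blast
  have nz: "\<not> is_zero_rep n (shift_rep n s M)"
  proof
    assume z: "is_zero_rep n (shift_rep n s M)"
    have "(i0 + s') mod n < n" using n by simp
    then have "dims M (((i0 + s') mod n + s) mod n) = 0" using z unfolding is_zero_rep_def by simp
    then show False using mod_add_mod_add_eq[OF n i0(1) ss] i0(2) by simp
  qed
  have "\<forall>e. is_hom n e (shift_rep n s M) (shift_rep n s M) \<longrightarrow> (\<forall>i<n. e i * e i = e i) \<longrightarrow>
        (\<forall>i<n. e i = 0\<^sub>m (dims (shift_rep n s M) i) (dims (shift_rep n s M) i)) \<or>
            (\<forall>i<n. e i = 1\<^sub>m (dims (shift_rep n s M) i))"
  proof (intro allI impI)
    fix e assume e: "is_hom n e (shift_rep n s M) (shift_rep n s M)"
      and idem: "\<forall>i<n. e i * e i = e i"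
    have e': "is_hom n (\<lambda>i. e ((i+s') mod n)) M M" using is_hom_shift_rep_back[OF n e ss] .
    have idem': "\<forall>i<n. e ((i+s') mod n) * e ((i+s') mod n) = e ((i+s') mod n)" using idem n by simp
    have bk: "\<And>i. i < n \<Longrightarrow> e i = e (((i+s) mod n + s') mod n)"
    proof -
      fix i assume i: "i < n"
      have "(s' + s) mod n = 0" using ss by (simp add: add.commute)
      then show "e i = e (((i+s) mod n + s') mod n)" using mod_add_mod_add_eq[OF n i, of s' s]
        by simp
    qed
    from M e' idem' have "(\<forall>i<n. e ((i+s') mod n) = 0\<^sub>m (dims M i) (dims M i)) \<or>
        (\<forall>i<n. e ((i+s') mod n) = 1\<^sub>m (dims M i))"
      unfolding indecomposable_def by blast
    then show "(\<forall>i<n. e i = 0\<^sub>m (dims (shift_rep n s M) i) (dims (shift_rep n s M) i)) \<or>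
        (\<forall>i<n. e i = 1\<^sub>m (dims (shift_rep n s M) i))"
    proof
      assume z: "\<forall>i<n. e ((i+s') mod n) = 0\<^sub>m (dims M i) (dims M i)"
      have "\<forall>i<n. e i = 0\<^sub>m (dims (shift_rep n s M) i) (dims (shift_rep n s M) i)"
      proof (intro allI impI)
        fix i assume i: "i < n"
        have "(i+s) mod n < n" using n by simp
        then show "e i = 0\<^sub>m (dims (shift_rep n s M) i) (dims (shift_rep n s M) i)" using z bk[OF i]
          by simp
      qed
      then show ?thesis by simp
    next
      assume z: "\<forall>i<n. e ((i+s') mod n) = 1\<^sub>m (dims M i)"
      have "\<forall>i<n. e i = 1\<^sub>m (dims (shift_rep n s M) i)"
      proof (intro allI impI)
        fix i assume i: "i < n"
        have "(i+s) mod n < n" using n by simp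
        then show "e i = 1\<^sub>m (dims (shift_rep n s M) i)" using z bk[OF i] by simp
      qed
      then show ?thesis by simp
    qed
  qed
  then show ?thesis unfolding indecomposable_def using is_rep_shift_rep[OF n R] nz by blast
qed

lemma offset_shift:
  assumes n: "0 < n"
  shows "offset n t ((i+s) mod n) = offset n (offset n s t) i"
proof -
  have nn: "0 \<le> (int t - int s) mod int n" using n by simp
  have "(int ((i+s) mod n) - int t) mod int n = (int i + int s - int t) mod int n"
    by (simp add: zmod_int mod_diff_left_eq)
  also have "\<dots> = (int i - (int t - int s)) mod int n" by (simp add: algebra_simps)
  also have "\<dots> = (int i - (int t - int s) mod int n) mod int n" by (simp add: mod_diff_right_eq)
  also have "\<dots> = (int i - int (offset n s t)) mod int n" unfolding offset_def using nn by simp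
  finally show ?thesis unfolding offset_def by simp
qed

lemma iso_shift_rep_uniserial:
  assumes n: "0 < n"
  shows "iso n (shift_rep n s (uniserial n t m :: 'k::field qrep)) (uniserial n (offset n s t) m)"
proof (rule iso_eqI)
  show "is_rep n m (shift_rep n s (uniserial n t m :: 'k qrep))"
    using is_rep_shift_rep[OF n is_rep_uniserial[OF n, of m m]] by simp
  fix i assume i: "i < n"
  show "dims (shift_rep n s (uniserial n t m :: 'k qrep)) i = dims
      (uniserial n (offset n s t) m :: 'k qrep) i"
    by (simp add: uniserial_dim_def offset_shift[OF n])
  have "uniserial_dim n t m (nxt n ((i + s) mod n)) = uniserial_dim n (offset n s t) m (nxt n i)"
    unfolding nxt_mod_add uniserial_dim_def using offset_shift[OF n] by simp
  moreover have "offset n t (nxt n ((i + s) mod n)) = offset n (offset n s t) (nxt n i)"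
    unfolding nxt_mod_add using offset_shift[OF n] by simp
  moreover have "uniserial_dim n t m ((i + s) mod n) = uniserial_dim n (offset n s t) m i"
    unfolding uniserial_dim_def using offset_shift[OF n] by simp
  moreover have "offset n t ((i + s) mod n) = offset n (offset n s t) i" using offset_shift[OF n]
    by simp
  ultimately show "maps (shift_rep n s (uniserial n t m :: 'k qrep)) i = maps
      (uniserial n (offset n s t) m :: 'k qrep) i"
    by (simp add: uniserial_map_def)
qed

definition nu_top :: "nat \<Rightarrow> nat \<Rightarrow> nat \<Rightarrow> int \<Rightarrow> nat" where
  "nu_top n l t j = nat ((int t - j * int l) mod int n)"

lemma nu_top_less: "0 < n \<Longrightarrow> nu_top n l t j < n"
  unfolding nu_top_def by (simp add: nat_less_iff)

lemma offset_nu_top: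
  assumes "0 < n"
  shows "offset n (nu_top n l t j2) (nu_top n l t j1) = nat (((j2 - j1) * int l) mod int n)"
proof -
  have "(int (nu_top n l t j1) - int (nu_top n l t j2)) mod int n
      = ((int t - j1 * int l) - (int t - j2 * int l)) mod int n"
    unfolding nu_top_def using assms by (simp add: mod_diff_eq)
  then show ?thesis unfolding offset_def by (simp add: algebra_simps)
qed

lemma iso_nu_pow_uniserial:
  assumes "0 < n"
  shows "iso n (nu_pow n l j (uniserial n t m :: 'k::field qrep)) (uniserial n (nu_top n l t j) m)"
proof -
  have "offset n (nat ((j * int l) mod int n)) t = nu_top n l t j"
    unfolding offset_def nu_top_def using assms by (simp add: mod_diff_right_eq)
  then show ?thesis
    unfolding nu_pow_def
      using iso_shift_rep_uniserial[OF assms, of "nat ((j * int l) mod int n)" t m] by simp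
qed

lemma nu_orbit_iso_eq:
  assumes n: "0 < n" and M: "is_rep n l M" and N: "is_rep n l N" and iso: "iso n M N"
  shows "nu_orbit n l M = nu_orbit n l N"
proof -
  have "iso n X (nu_pow n l j M) \<longleftrightarrow> iso n X (nu_pow n l j N)" if X: "is_rep n l X" for X j
    using iso_trans[OF X is_rep_shift_rep[OF n M] is_rep_shift_rep[OF n N] _ iso_shift_rep[OF n
        iso]]
      iso_trans[OF X is_rep_shift_rep[OF n N] is_rep_shift_rep[OF n M] _ iso_shift_rep[OF n
          iso_sym[OF iso]]]
    unfolding nu_pow_def by blast
  then show ?thesis unfolding nu_orbit_def by blast
qed

lemma mem_nu_orbit_uniserial_iff:
  assumes n: "0 < n" and m: "m \<le> l + 1"
  shows "X \<in> nu_orbit n l (uniserial n t m :: 'k::field qrep) \<longleftrightarrow>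
    is_rep n l X \<and> (\<exists>j. iso n X (uniserial n (nu_top n l t j) m))"
proof -
  have U: "is_rep n l (uniserial n t' m :: 'k qrep)" for t' using is_rep_uniserial[OF n m] .
  have P: "is_rep n l (nu_pow n l j (uniserial n t m :: 'k qrep))" for j
    unfolding nu_pow_def using is_rep_shift_rep[OF n U] .
  have "iso n X (nu_pow n l j (uniserial n t m :: 'k qrep)) \<longleftrightarrow> iso n X
      (uniserial n (nu_top n l t j) m)"
    if X: "is_rep n l X" for X j
    using iso_trans[OF X P U _ iso_nu_pow_uniserial[OF n]]
      iso_trans[OF X U P _ iso_sym[OF iso_nu_pow_uniserial[OF n]]] by blast
  then show ?thesis unfolding nu_orbit_def by blast
qed

lemma orthogonal_system_nu_orbit_uniserial_iff:
  assumes n: "0 < n" and t: "t < n" and m: "0 < m" "m \<le> l"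
    and ind: "indecomposable n l (uniserial n t m :: 'k::field qrep)"
  shows "orthogonal_system n l (nu_orbit n l (uniserial n t m :: 'k qrep)) \<longleftrightarrow>
    (m \<le> n \<or> l + 1 \<le> m + n) \<and>
    (\<forall>j1 j2. nu_top n l t j1 \<noteq> nu_top n l t j2 \<longrightarrow>
       m \<le> offset n (nu_top n l t j2) (nu_top n l t j1) \<or> l + 1 \<le> offset n (nu_top n l t j2)
           (nu_top n l t j1) + m)"
    (is "?orth \<longleftrightarrow> ?brick \<and> ?hom")
proof -
  let ?T = "nu_top n l t" and ?O = "nu_orbit n l (uniserial n t m :: 'k qrep)"
  have m': "0 < m" "m \<le> l + 1" using m by auto
  have T: "?T j < n" for j using nu_top_less[OF n] .
  have U: "is_rep n l (uniserial n t' m :: 'k qrep)" for t' using is_rep_uniserial[OF n m'(2)] .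
  have mem: "X \<in> ?O \<longleftrightarrow> is_rep n l X \<and> (\<exists>j. iso n X (uniserial n (?T j) m))" for X
    using mem_nu_orbit_uniserial_iff[OF n m'(2)] .
  have UO: "uniserial n (?T j) m \<in> ?O" for j
  proof -
    have "iso n (uniserial n (?T j) m :: 'k qrep) (uniserial n (?T j) m)"
      by (rule iso_eqI[OF U]) auto
    then show ?thesis using mem U by blast
  qed
  have brick: "stable_brick n l (uniserial n (?T j) m :: 'k qrep) \<longleftrightarrow> m \<le> n \<or> l + 1 \<le> m + n" for j
  proof -
    have "indecomposable n l
        (shift_rep n (nat ((j * int l) mod int n)) (uniserial n t m :: 'k qrep))"
      using indecomposable_shift_rep[OF n ind] .
    then have "indecomposable n l (uniserial n (?T j) m :: 'k qrep)"
      using indecomposable_iso[OF U iso_sym[OF iso_nu_pow_uniserial[OF n]]] unfolding nu_pow_def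
        by blast
    then show ?thesis using stable_brick_uniserial_iff[OF n T m] by blast
  qed
  have hom: "stable_hom_zero n l (uniserial n (?T j1) m :: 'k qrep) (uniserial n (?T j2) m) \<longleftrightarrow>
      m \<le> offset n (?T j2) (?T j1) \<or> l + 1 \<le> offset n (?T j2) (?T j1) + m" for j1 j2
    using stable_hom_zero_uniserial_iff[OF n T T m'] .
  show ?thesis
  proof
    assume ?orth
    then show "?brick \<and> ?hom"
      using UO brick hom uniserial_not_iso[OF n T T _ m(1)] unfolding orthogonal_system_def by blast
  next
    assume "?brick \<and> ?hom"
    then have b: ?brick and h: ?hom by auto
    have "stable_brick n l X" if "X \<in> ?O" for X
      using that mem brick b stable_brick_iso by blast
    moreover have "stable_hom_zero n l X Y" if X: "X \<in> ?O" and Y: "Y \<in> ?O" and ni: "\<not> iso n X Y"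
      for X Y
    proof -
      obtain j1 j2 where RX: "is_rep n l X" and j1: "iso n X (uniserial n (?T j1) m)"
        and RY: "is_rep n l Y" and j2: "iso n Y (uniserial n (?T j2) m)"
        using X Y mem by blast
      have "?T j1 \<noteq> ?T j2"
      proof
        assume "?T j1 = ?T j2"
        then have "iso n X Y" using iso_trans[OF RX U RY j1] iso_sym[OF j2] by simp
        then show False using ni by contradiction
      qed
      then show ?thesis using stable_hom_zero_iso[OF RX RY U U j1 j2] hom h by blast
    qed
    ultimately show ?orth unfolding orthogonal_system_def by blast
  qed
qed

lemma gcd_le_mult_mod:
  assumes "0 < n" and "(k * int l) mod int n \<noteq> 0"
  shows "int (gcd n l) \<le> (k * int l) mod int n"
proof -
  have "int (gcd n l) dvd int n" "int (gcd n l) dvd k * int l" by simp_all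
  then have "int (gcd n l) dvd (k * int l) mod int n" by (simp add: dvd_mod_iff)
  moreover have "0 \<le> (k * int l) mod int n" using assms(1) by simp
  then have "0 < (k * int l) mod int n" using assms(2) by linarith
  ultimately show ?thesis by (rule zdvd_imp_le)
qed

lemma exists_mult_mod_eq_gcd:
  obtains k where "(k * int l) mod int n = int (gcd n l) mod int n"
proof -
  obtain u v where "u * int n + v * int l = gcd (int n) (int l)" using bezout_int by blast
  then have "v * int l = int (gcd n l) + (- u) * int n" by simp
  then have "(v * int l) mod int n = int (gcd n l) mod int n" by (simp only: mod_mult_self1)
  then show ?thesis using that by blast
qed

text \<open>The offsets between distinct tops of the orbit are exactly the nonzero multiples of gcd n l
  below n, and gcd n l itself occurs unless gcd n l = n.\<close>
lemma nu_orbit_offsets_condition_iff: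
  assumes n: "0 < n" and t: "t < n" and l: "0 < l"
  shows "((m \<le> n \<or> l + 1 \<le> m + n) \<and>
    (\<forall>j1 j2. nu_top n l t j1 \<noteq> nu_top n l t j2 \<longrightarrow>
       m \<le> offset n (nu_top n l t j2) (nu_top n l t j1) \<or> l + 1 \<le> offset n (nu_top n l t j2)
           (nu_top n l t j1) + m))
    \<longleftrightarrow> m \<le> gcd n l \<or> l + 1 \<le> m + gcd n l"
proof -
  let ?e = "gcd n l" and ?T = "nu_top n l t"
  have e: "0 < ?e" "?e \<le> n" using n by (simp_all add: gcd_le1_nat)
  have ne_iff: "?T j1 \<noteq> ?T j2 \<longleftrightarrow> offset n (?T j2) (?T j1) \<noteq> 0" for j1 j2
    using offset_eq_0_iff[OF n nu_top_less[OF n] nu_top_less[OF n]] by auto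
  have ge: "?e \<le> offset n (?T j2) (?T j1)" if "?T j1 \<noteq> ?T j2" for j1 j2
  proof -
    have "((j2 - j1) * int l) mod int n \<noteq> 0" using ne_iff[of j1 j2] that offset_nu_top[OF n] by auto
    then have "nat (int ?e) \<le> nat (((j2 - j1) * int l) mod int n)"
      by (intro nat_mono gcd_le_mult_mod[OF n])
    then show ?thesis using offset_nu_top[OF n] by simp
  qed
  show ?thesis
  proof
    assume cond: "(m \<le> n \<or> l + 1 \<le> m + n) \<and> (\<forall>j1 j2. ?T j1 \<noteq> ?T j2 \<longrightarrow>
       m \<le> offset n (?T j2) (?T j1) \<or> l + 1 \<le> offset n (?T j2) (?T j1) + m)"
    show "m \<le> ?e \<or> l + 1 \<le> m + ?e"
    proof (cases "?e = n")
      case True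
      then show ?thesis using cond by simp
    next
      case False
      obtain k where k: "(k * int l) mod int n = int ?e mod int n" using exists_mult_mod_eq_gcd .
      have off: "offset n (?T k) (?T 0) = ?e" using offset_nu_top[OF n, of l t k 0] k e False
        by simp
      then have "?T 0 \<noteq> ?T k" using ne_iff[of 0 k] e by simp
      then have "m \<le> offset n (?T k) (?T 0) \<or> l + 1 \<le> offset n (?T k) (?T 0) + m" using cond
        by blast
      then show ?thesis using off by linarith
    qed
  next
    assume c: "m \<le> ?e \<or> l + 1 \<le> m + ?e"
    have "m \<le> offset n (?T j2) (?T j1) \<or> l + 1 \<le> offset n (?T j2) (?T j1) + m"
      if "?T j1 \<noteq> ?T j2" for j1 j2
      using ge[OF that] c by linarith
    moreover have "m \<le> n \<or> l + 1 \<le> m + n" using c e by linarith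
    ultimately show "(m \<le> n \<or> l + 1 \<le> m + n) \<and> (\<forall>j1 j2. ?T j1 \<noteq> ?T j2 \<longrightarrow>
       m \<le> offset n (?T j2) (?T j1) \<or> l + 1 \<le> offset n (?T j2) (?T j1) + m)" by blast
  qed
qed

theorem proposition2p10:
  fixes n l :: nat and M :: "'k::field qrep"
  assumes "alg_closed_field TYPE('k)"
    and "n \<ge> 1" and "l \<ge> 1"
    and "indecomposable n l M"
    and "\<not> projective n l M"
  shows "orthogonal_system n l (nu_orbit n l M) \<longleftrightarrow>
           (len n M \<le> gcd n l \<or> (l + 1 - gcd n l \<le> len n M \<and> len n M \<le> l))"
proof -
  have n: "0 < n" and l: "0 < l" using assms(2,3) by simp_all
  have R: "is_rep n l M" using assms(4) unfolding indecomposable_def by simp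
  obtain t m where t: "t < n" and m: "0 < m" "m \<le> l + 1" and iso: "iso n M (uniserial n t m)"
    using indecomposable_iso_uniserial[OF n assms(4)] by blast
  have U: "is_rep n l (uniserial n t m :: 'k qrep)" using is_rep_uniserial[OF n m(2)] .
  have len: "len n M = m" using iso_len[OF iso] len_uniserial[OF n] by simp
  have "m \<noteq> l + 1"
  proof
    assume "m = l + 1"
    then have "projective n l M" using projective_iso[OF R iso] projective_uniserial[OF n t, of l]
      by simp
    then show False using assms(5) by contradiction
  qed
  then have ml: "m \<le> l" using m(2) by simp
  have ind: "indecomposable n l (uniserial n t m :: 'k qrep)"
    using indecomposable_iso[OF U iso_sym[OF iso] assms(4)] .
  have "orthogonal_system n l (nu_orbit n l M) \<longleftrightarrow> m \<le> gcd n l \<or> l + 1 \<le> m + gcd n l"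
    using nu_orbit_iso_eq[OF n R U iso] orthogonal_system_nu_orbit_uniserial_iff[OF n t m(1) ml ind]
      nu_orbit_offsets_condition_iff[OF n t l] by simp
  then show ?thesis using len ml by linarith
qed

end
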